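(* Let $n\ge 3$ be an odd integer, $(\mathcal{C},\Sigma)$ an $n$-angulated category and $(\mathcal{A},\Sigma)$ a complete and dense $n$-angulated subcategory. Then for every object $C$ of $\mathcal{C}$: $C$ lies in $\mathcal{A}$ if and only if $[C]=0$ in $K_0(\mathcal{C})/\operatorname{Im}K_0(\mathcal{A})$.
   Context: All categories are small. Fix an integer $n\ge 3$. Let $\mathcal{C}$ be an additive category with an automorphism $\Sigma$. An $n$-$\Sigma$-sequence in $\mathcal{C}$ is a diagram $A_1\xrightarrow{\alpha_1}A_2\xrightarrow{\alpha_2}\cdots\xrightarrow{\alpha_{n-1}}A_n\xrightarrow{\alpha_n}\Sigma A_1$. Its left rotation is $A_2\xrightarrow{\alpha_2}\cdots\xrightarrow{\alpha_n}\Sigma A_1\xrightarrow{(-1)^n\Sigma\alpha_1}\Sigma A_2$. A morphism from $(A_\bullet,\alpha)$ to $(B_\bullet,\beta)$ is a tuple $(\varphi_1,\dots,\varphi_n)$, $\varphi_i:A_i\to B_i$, with $\beta_i\varphi_i=\varphi_{i+1}\alpha_i$ for $1\le i\le n-1$ and $\beta_n\varphi_n=(\Sigma\varphi_1)\alpha_n$; it is an isomorphism if all $\varphi_i$ are isomorphisms. Direct sums of sequences are taken termwise. $(\mathcal{C},\Sigma)$ is $n$-angulated if it is equipped with a collection $\mathscr N$ of $n$-$\Sigma$-sequences, called $n$-angles, such that: (N1)(a) $\mathscr N$ is closed under direct sums, direct summands and isomorphisms of $n$-$\Sigma$-sequences; (b) for every object $A$, the trivial sequence $A\xrightarrow{1}A\to0\to\cdots\to0\to\Sigma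 A$ is in $\mathscr N$; (c) every morphism $A_1\to A_2$ is the first morphism of some $n$-angle; (N2) an $n$-$\Sigma$-sequence is in $\mathscr N$ iff its left rotation is; (N3) given $n$-angles $(A_\bullet,\alpha),(B_\bullet,\beta)$ and $\varphi_1:A_1\to B_1$, $\varphi_2:A_2\to B_2$ with $\beta_1\varphi_1=\varphi_2\alpha_1$, there exist $\varphi_3,\dots,\varphi_n$ making $(\varphi_1,\dots,\varphi_n)$ a morphism; (N4) in (N3) the $\varphi_i$ can be chosen so that the mapping cone $A_2\oplus B_1\to A_3\oplus B_2\to\cdots\to\Sigma A_1\oplus B_n\to\Sigma A_2\oplus\Sigma B_1$, with maps $\left[\begin{smallmatrix}-\alpha_{i+1}&0\\ \varphi_{i+1}&\beta_i\end{smallmatrix}\right]$ ($1\le i\le n-1$) and last map $\left[\begin{smallmatrix}-\Sigma\alpha_1&0\\ \Sigma\varphi_1&\beta_n\end{smallmatrix}\right]$, is an $n$-angle. Grothendieck group: $F(\mathcal{C})$ is the free abelian group on isomorphism classes $\langle A\rangle$ of objects; for an $n$-angle $A_\bullet$, $\chi(A_\bullet)=\sum_{i=1}^n(-1)^{i+1}\langle A_i\rangle$; $R(\mathcal{C})$ is generated by all $\chi(A_\bullet)$, together with $\langle 0\rangle$ when $n$ is even; $K_0(\mathcal{C})=F(\mathcal{C})/R(\mathcal{C})$, $[A]$ the class of $\langle A\rangle$. An additive functor $L:\mathcal{C}\to\mathcal{C}'$ between $n$-angulated categories is $n$-angulated if there is a natural isomorphism $\eta:L\circ\Sigma\to\Sigma'\circ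 L$ such that $L$ sends each $n$-angle $(A_\bullet,\alpha)$ to the $n$-angle $L A_1\xrightarrow{L\alpha_1}\cdots\xrightarrow{L\alpha_{n-1}}LA_n\xrightarrow{\eta\circ L\alpha_n}\Sigma'LA_1$. An $n$-angulated subcategory of $(\mathcal{C},\Sigma)$ is a full subcategory $\mathcal{A}$, closed under isomorphisms, on which $\Sigma$ restricts to an automorphism, equipped with $n$-angles making $(\mathcal{A},\Sigma)$ $n$-angulated, such that the inclusion $\mathcal{A}\to\mathcal{C}$ is $n$-angulated. $\mathcal{A}$ is dense if every object of $\mathcal{C}$ is a direct summand of an object of $\mathcal{A}$; complete if whenever an $n$-angle $A_1\to\cdots\to A_n\to\Sigma A_1$ in $\mathcal{C}$ has $n-1$ of $A_1,\dots,A_n$ in $\mathcal{A}$, the remaining one is in $\mathcal{A}$. $\operatorname{Im}K_0(\mathcal{A})$ is the image of the homomorphism $K_0(\mathcal{A})\to K_0(\mathcal{C})$, $[A]\mapsto[A]$, induced by the inclusion. *)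

theory Defs
  imports Main
begin

record ('o, 'm) addcat =
  Obj   :: "'o set"
  Mor   :: "'m set"
  Dom   :: "'m \<Rightarrow> 'o"
  Cod   :: "'m \<Rightarrow> 'o"
  cmp   :: "'m \<Rightarrow> 'm \<Rightarrow> 'm"   (* cmp g f = g \<circ> f *)
  idm   :: "'o \<Rightarrow> 'm"
  madd  :: "'m \<Rightarrow> 'm \<Rightarrow> 'm"
  mneg  :: "'m \<Rightarrow> 'm"
  mzero :: "'o \<Rightarrow> 'o \<Rightarrow> 'm"

definition hom :: "('o, 'm) addcat \<Rightarrow> 'o \<Rightarrow> 'o \<Rightarrow> 'm set" where
  "hom C A B = {f \<in> Mor C. Dom C f = A \<and> Cod C f = B}"

definition is_category :: "('o, 'm) addcat \<Rightarrow> bool" where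
  "is_category C \<longleftrightarrow>
     (\<forall>f \<in> Mor C. Dom C f \<in> Obj C \<and> Cod C f \<in> Obj C) \<and>
     (\<forall>A \<in> Obj C. idm C A \<in> hom C A A) \<and>
     (\<forall>A \<in> Obj C. \<forall>B \<in> Obj C. \<forall>D \<in> Obj C. \<forall>f \<in> hom C A B. \<forall>g \<in> hom C B D.
         cmp C g f \<in> hom C A D) \<and>
     (\<forall>A \<in> Obj C. \<forall>B \<in> Obj C. \<forall>D \<in> Obj C. \<forall>E \<in> Obj C.
        \<forall>f \<in> hom C A B. \<forall>g \<in> hom C B D. \<forall>h \<in> hom C D E.
         cmp C h (cmp C g f) = cmp C (cmp C h g) f) \<and>
     (\<forall>A \<in> Obj C. \<forall>B \<in> Obj C. \<forall>f \<in> hom C A B.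
         cmp C f (idm C A) = f \<and> cmp C (idm C B) f = f)"

definition is_preadditive :: "('o, 'm) addcat \<Rightarrow> bool" where
  "is_preadditive C \<longleftrightarrow> is_category C \<and>
     (\<forall>A \<in> Obj C. \<forall>B \<in> Obj C.
        mzero C A B \<in> hom C A B \<and>
        (\<forall>f \<in> hom C A B. mneg C f \<in> hom C A B \<and>
            madd C (mzero C A B) f = f \<and> madd C (mneg C f) f = mzero C A B) \<and>
        (\<forall>f \<in> hom C A B. \<forall>g \<in> hom C A B.
            madd C f g \<in> hom C A B \<and> madd C f g = madd C g f) \<and>
        (\<forall>f \<in> hom C A B. \<forall>g \<in> hom C A B. \<forall>h \<in> hom C A B.
            madd C (madd C f g) h = madd C f (madd C g h))) \<and>
     (\<forall>A \<in> Obj C. \<forall>B \<in> Obj C. \<forall>D \<in> Obj C.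
        \<forall>f \<in> hom C A B. \<forall>f' \<in> hom C A B. \<forall>g \<in> hom C B D. \<forall>g' \<in> hom C B D.
          cmp C g (madd C f f') = madd C (cmp C g f) (cmp C g f') \<and>
          cmp C (madd C g g') f = madd C (cmp C g f) (cmp C g' f))"

definition is_zero_obj :: "('o, 'm) addcat \<Rightarrow> 'o \<Rightarrow> bool" where
  "is_zero_obj C Z \<longleftrightarrow> Z \<in> Obj C \<and>
     (\<forall>A \<in> Obj C. (\<exists>!f. f \<in> hom C Z A) \<and> (\<exists>!f. f \<in> hom C A Z))"

definition is_biproduct :: "('o, 'm) addcat \<Rightarrow> 'o \<Rightarrow> 'o \<Rightarrow> 'o \<Rightarrow> 'm \<Rightarrow> 'm \<Rightarrow> 'm \<Rightarrow> 'm \<Rightarrow> bool" where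
  "is_biproduct C A B S i1 i2 p1 p2 \<longleftrightarrow>
     A \<in> Obj C \<and> B \<in> Obj C \<and> S \<in> Obj C \<and>
     i1 \<in> hom C A S \<and> i2 \<in> hom C B S \<and> p1 \<in> hom C S A \<and> p2 \<in> hom C S B \<and>
     cmp C p1 i1 = idm C A \<and> cmp C p2 i2 = idm C B \<and>
     cmp C p1 i2 = mzero C B A \<and> cmp C p2 i1 = mzero C A B \<and>
     madd C (cmp C i1 p1) (cmp C i2 p2) = idm C S"

definition is_additive :: "('o, 'm) addcat \<Rightarrow> bool" where
  "is_additive C \<longleftrightarrow> is_preadditive C \<and> (\<exists>Z. is_zero_obj C Z) \<and>
     (\<forall>A \<in> Obj C. \<forall>B \<in> Obj C. \<exists>S i1 i2 p1 p2. is_biproduct C A B S i1 i2 p1 p2)"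

definition is_iso :: "('o, 'm) addcat \<Rightarrow> 'm \<Rightarrow> bool" where
  "is_iso C f \<longleftrightarrow> f \<in> Mor C \<and>
     (\<exists>g \<in> hom C (Cod C f) (Dom C f). cmp C g f = idm C (Dom C f) \<and> cmp C f g = idm C (Cod C f))"

definition isomorphic :: "('o, 'm) addcat \<Rightarrow> 'o \<Rightarrow> 'o \<Rightarrow> bool" where
  "isomorphic C A B \<longleftrightarrow> (\<exists>f \<in> hom C A B. is_iso C f)"

text \<open>An automorphism \<open>\<Sigma> = (SO, SM)\<close> (action on objects, on morphisms) of the additive category.\<close>
definition is_automorphism :: "('o, 'm) addcat \<Rightarrow> ('o \<Rightarrow> 'o) \<Rightarrow> ('m \<Rightarrow> 'm) \<Rightarrow> bool" where
  "is_automorphism C SO SM \<longleftrightarrow>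
     bij_betw SO (Obj C) (Obj C) \<and> bij_betw SM (Mor C) (Mor C) \<and>
     (\<forall>f \<in> Mor C. Dom C (SM f) = SO (Dom C f) \<and> Cod C (SM f) = SO (Cod C f)) \<and>
     (\<forall>A \<in> Obj C. SM (idm C A) = idm C (SO A)) \<and>
     (\<forall>A \<in> Obj C. \<forall>B \<in> Obj C. \<forall>D \<in> Obj C. \<forall>f \<in> hom C A B. \<forall>g \<in> hom C B D.
        SM (cmp C g f) = cmp C (SM g) (SM f)) \<and>
     (\<forall>A \<in> Obj C. \<forall>B \<in> Obj C. \<forall>f \<in> hom C A B. \<forall>g \<in> hom C A B.
        SM (madd C f g) = madd C (SM f) (SM g))"

text \<open>A sequence is given by its objects \<open>X 1, ..., X n\<close> and maps \<open>a 1, ..., a n\<close>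
  (values at other indices are irrelevant).\<close>
type_synonym ('o, 'm) seq = "(nat \<Rightarrow> 'o) \<times> (nat \<Rightarrow> 'm)"

definition is_seq :: "nat \<Rightarrow> ('o, 'm) addcat \<Rightarrow> ('o \<Rightarrow> 'o) \<Rightarrow> ('o, 'm) seq \<Rightarrow> bool" where
  "is_seq n C SO S \<longleftrightarrow>
     (\<forall>i \<in> {1..n}. fst S i \<in> Obj C) \<and>
     (\<forall>i \<in> {1..<n}. snd S i \<in> hom C (fst S i) (fst S (Suc i))) \<and>
     snd S n \<in> hom C (fst S n) (SO (fst S 1))"

definition seq_mor :: "nat \<Rightarrow> ('o, 'm) addcat \<Rightarrow> ('o \<Rightarrow> 'o) \<Rightarrow> ('m \<Rightarrow> 'm)
    \<Rightarrow> ('o, 'm) seq \<Rightarrow> ('o, 'm) seq \<Rightarrow> (nat \<Rightarrow> 'm) \<Rightarrow> bool" where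
  "seq_mor n C SO SM S T \<phi> \<longleftrightarrow> is_seq n C SO S \<and> is_seq n C SO T \<and>
     (\<forall>i \<in> {1..n}. \<phi> i \<in> hom C (fst S i) (fst T i)) \<and>
     (\<forall>i \<in> {1..<n}. cmp C (snd T i) (\<phi> i) = cmp C (\<phi> (Suc i)) (snd S i)) \<and>
     cmp C (snd T n) (\<phi> n) = cmp C (SM (\<phi> 1)) (snd S n)"

definition seq_iso :: "nat \<Rightarrow> ('o, 'm) addcat \<Rightarrow> ('o \<Rightarrow> 'o) \<Rightarrow> ('m \<Rightarrow> 'm)
    \<Rightarrow> ('o, 'm) seq \<Rightarrow> ('o, 'm) seq \<Rightarrow> (nat \<Rightarrow> 'm) \<Rightarrow> bool" where
  "seq_iso n C SO SM S T \<phi> \<longleftrightarrow> seq_mor n C SO SM S T \<phi> \<and> (\<forall>i \<in> {1..n}. is_iso C (\<phi> i))"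

definition is_seq_dsum :: "nat \<Rightarrow> ('o, 'm) addcat \<Rightarrow> ('o \<Rightarrow> 'o) \<Rightarrow> ('m \<Rightarrow> 'm)
    \<Rightarrow> ('o, 'm) seq \<Rightarrow> ('o, 'm) seq \<Rightarrow> ('o, 'm) seq \<Rightarrow> bool" where
  "is_seq_dsum n C SO SM S X Y \<longleftrightarrow>
     (\<exists>i1 i2 p1 p2.
        seq_mor n C SO SM X S i1 \<and> seq_mor n C SO SM Y S i2 \<and>
        seq_mor n C SO SM S X p1 \<and> seq_mor n C SO SM S Y p2 \<and>
        (\<forall>i \<in> {1..n}. is_biproduct C (fst X i) (fst Y i) (fst S i) (i1 i) (i2 i) (p1 i) (p2 i)))"

definition trivial_seq :: "nat \<Rightarrow> ('o, 'm) addcat \<Rightarrow> ('o \<Rightarrow> 'o) \<Rightarrow> 'o \<Rightarrow> 'o \<Rightarrow> ('o, 'm) seq" where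
  "trivial_seq n C SO A Z =
     (\<lambda>i. if i \<le> 2 then A else Z,
      \<lambda>i. if i = 1 then idm C A
           else if i = 2 then mzero C A Z
           else if i < n then mzero C Z Z
           else mzero C Z (SO A))"

definition left_rot :: "nat \<Rightarrow> ('o, 'm) addcat \<Rightarrow> ('o \<Rightarrow> 'o) \<Rightarrow> ('m \<Rightarrow> 'm)
    \<Rightarrow> ('o, 'm) seq \<Rightarrow> ('o, 'm) seq" where
  "left_rot n C SO SM S =
     (\<lambda>i. if i < n then fst S (Suc i) else SO (fst S 1),
      \<lambda>i. if i < n then snd S (Suc i)
           else if even n then SM (snd S 1) else mneg C (SM (snd S 1)))"

text \<open>The mapping cone of \<open>\<phi>\<close>, built from chosen biproducts \<open>D i\<close> of
  \<open>A_{i+1}\<close> and \<open>B_i\<close> (with \<open>A_{n+1} = \<Sigma> A_1\<close>).\<close>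
definition cone_seq :: "nat \<Rightarrow> ('o, 'm) addcat \<Rightarrow> ('m \<Rightarrow> 'm)
    \<Rightarrow> ('o, 'm) seq \<Rightarrow> ('o, 'm) seq \<Rightarrow> (nat \<Rightarrow> 'm)
    \<Rightarrow> (nat \<Rightarrow> 'o) \<Rightarrow> (nat \<Rightarrow> 'm) \<Rightarrow> (nat \<Rightarrow> 'm) \<Rightarrow> (nat \<Rightarrow> 'm) \<Rightarrow> (nat \<Rightarrow> 'm)
    \<Rightarrow> ('o, 'm) seq" where
  "cone_seq n C SM S T \<phi> D j1 j2 q1 q2 =
     (D,
      \<lambda>i. if i < n then
             madd C (cmp C (j1 (Suc i)) (cmp C (mneg C (snd S (Suc i))) (q1 i)))
                    (cmp C (j2 (Suc i)) (madd C (cmp C (\<phi> (Suc i)) (q1 i)) (cmp C (snd T i) (q2 i))))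
           else
             madd C (cmp C (SM (j1 1)) (cmp C (mneg C (SM (snd S 1))) (q1 n)))
                    (cmp C (SM (j2 1)) (madd C (cmp C (SM (\<phi> 1)) (q1 n)) (cmp C (snd T n) (q2 n)))))"

definition n_angulated :: "nat \<Rightarrow> ('o, 'm) addcat \<Rightarrow> ('o \<Rightarrow> 'o) \<Rightarrow> ('m \<Rightarrow> 'm)
    \<Rightarrow> ('o, 'm) seq set \<Rightarrow> bool" where
  "n_angulated n C SO SM N \<longleftrightarrow>
     is_additive C \<and> is_automorphism C SO SM \<and>
     (\<forall>S \<in> N. is_seq n C SO S) \<and>
     \<comment> \<open>(N1)(a)\<close>
     (\<forall>S X Y. is_seq n C SO S \<and> is_seq n C SO X \<and> is_seq n C SO Y \<and>
         is_seq_dsum n C SO SM S X Y \<longrightarrow> (S \<in> N \<longleftrightarrow> X \<in> N \<and> Y \<in> N)) \<and>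
     (\<forall>S T \<phi>. S \<in> N \<and> seq_iso n C SO SM S T \<phi> \<longrightarrow> T \<in> N) \<and>
     \<comment> \<open>(N1)(b)\<close>
     (\<forall>A \<in> Obj C. \<forall>Z. is_zero_obj C Z \<longrightarrow> trivial_seq n C SO A Z \<in> N) \<and>
     \<comment> \<open>(N1)(c)\<close>
     (\<forall>f \<in> Mor C. \<exists>S \<in> N. fst S 1 = Dom C f \<and> fst S 2 = Cod C f \<and> snd S 1 = f) \<and>
     \<comment> \<open>(N2)\<close>
     (\<forall>S. is_seq n C SO S \<longrightarrow> (S \<in> N \<longleftrightarrow> left_rot n C SO SM S \<in> N)) \<and>
     \<comment> \<open>(N3)\<close>
     (\<forall>S \<in> N. \<forall>T \<in> N. \<forall>f1 \<in> hom C (fst S 1) (fst T 1). \<forall>f2 \<in> hom C (fst S 2) (fst T 2).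
        cmp C (snd T 1) f1 = cmp C f2 (snd S 1) \<longrightarrow>
        (\<exists>\<phi>. \<phi> 1 = f1 \<and> \<phi> 2 = f2 \<and> seq_mor n C SO SM S T \<phi>)) \<and>
     \<comment> \<open>(N4)\<close>
     (\<forall>S \<in> N. \<forall>T \<in> N. \<forall>f1 \<in> hom C (fst S 1) (fst T 1). \<forall>f2 \<in> hom C (fst S 2) (fst T 2).
        cmp C (snd T 1) f1 = cmp C f2 (snd S 1) \<longrightarrow>
        (\<exists>\<phi>. \<phi> 1 = f1 \<and> \<phi> 2 = f2 \<and> seq_mor n C SO SM S T \<phi> \<and>
           (\<forall>D j1 j2 q1 q2.
              (\<forall>i \<in> {1..n}. is_biproduct C
                   (if i < n then fst S (Suc i) else SO (fst S 1)) (fst T i)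
                   (D i) (j1 i) (j2 i) (q1 i) (q2 i))
              \<longrightarrow> cone_seq n C SM S T \<phi> D j1 j2 q1 q2 \<in> N)))"

definition full_subcat :: "('o, 'm) addcat \<Rightarrow> 'o set \<Rightarrow> ('o, 'm) addcat" where
  "full_subcat C A = C\<lparr>Obj := A, Mor := {f \<in> Mor C. Dom C f \<in> A \<and> Cod C f \<in> A}\<rparr>"

text \<open>\<open>A\<close> (an object set, i.e. a full subcategory) with n-angles \<open>NA\<close> is an n-angulated
  subcategory of \<open>(C, \<Sigma>, N)\<close>; the inclusion is n-angulated via a natural isomorphism \<open>\<eta>\<close>.\<close>
definition n_angulated_subcat :: "nat \<Rightarrow> ('o, 'm) addcat \<Rightarrow> ('o \<Rightarrow> 'o) \<Rightarrow> ('m \<Rightarrow> 'm)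
    \<Rightarrow> ('o, 'm) seq set \<Rightarrow> 'o set \<Rightarrow> ('o, 'm) seq set \<Rightarrow> bool" where
  "n_angulated_subcat n C SO SM N A NA \<longleftrightarrow>
     A \<subseteq> Obj C \<and>
     (\<forall>X \<in> A. \<forall>Y \<in> Obj C. isomorphic C X Y \<longrightarrow> Y \<in> A) \<and>
     n_angulated n (full_subcat C A) SO SM NA \<and>
     (\<exists>\<eta>. (\<forall>X \<in> A. \<eta> X \<in> hom C (SO X) (SO X) \<and> is_iso C (\<eta> X)) \<and>
          (\<forall>f \<in> Mor C. Dom C f \<in> A \<and> Cod C f \<in> A \<longrightarrow>
              cmp C (\<eta> (Cod C f)) (SM f) = cmp C (SM f) (\<eta> (Dom C f))) \<and>
          (\<forall>S \<in> NA. (fst S, (snd S)(n := cmp C (\<eta> (fst S 1)) (snd S n))) \<in> N))"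

definition dense_subcat :: "('o, 'm) addcat \<Rightarrow> 'o set \<Rightarrow> bool" where
  "dense_subcat C A \<longleftrightarrow>
     (\<forall>X \<in> Obj C. \<exists>S \<in> A. \<exists>Y i1 i2 p1 p2. is_biproduct C X Y S i1 i2 p1 p2)"

definition complete_subcat :: "nat \<Rightarrow> ('o, 'm) seq set \<Rightarrow> 'o set \<Rightarrow> bool" where
  "complete_subcat n N A \<longleftrightarrow>
     (\<forall>S \<in> N. \<forall>k \<in> {1..n}. (\<forall>i \<in> {1..n} - {k}. fst S i \<in> A) \<longrightarrow> fst S k \<in> A)"

text \<open>Elements of the free abelian group \<open>F(C)\<close> on isomorphism classes are represented as
  integer-valued functions on isomorphism classes (sets of objects).\<close>
definition iso_class :: "('o, 'm) addcat \<Rightarrow> 'o \<Rightarrow> 'o set" where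
  "iso_class C X = {Y \<in> Obj C. isomorphic C X Y}"

definition gen :: "('o, 'm) addcat \<Rightarrow> 'o \<Rightarrow> ('o set \<Rightarrow> int)" where
  "gen C X = (\<lambda>K. if K = iso_class C X then 1 else 0)"

definition euler_char :: "nat \<Rightarrow> ('o, 'm) addcat \<Rightarrow> ('o, 'm) seq \<Rightarrow> ('o set \<Rightarrow> int)" where
  "euler_char n C S = (\<lambda>K. \<Sum>i = 1..n. (-1) ^ (i + 1) * gen C (fst S i) K)"

inductive_set zspan :: "('a \<Rightarrow> int) set \<Rightarrow> ('a \<Rightarrow> int) set" for G where
  zspan_zero: "(\<lambda>_. 0) \<in> zspan G"
| zspan_gen: "g \<in> G \<Longrightarrow> g \<in> zspan G"
| zspan_diff: "x \<in> zspan G \<Longrightarrow> y \<in> zspan G \<Longrightarrow> (\<lambda>K. x K - y K) \<in> zspan G"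

definition K0_relations :: "nat \<Rightarrow> ('o, 'm) addcat \<Rightarrow> ('o, 'm) seq set \<Rightarrow> ('o set \<Rightarrow> int) set" where
  "K0_relations n C N =
     {euler_char n C S | S. S \<in> N} \<union> (if even n then {gen C Z | Z. is_zero_obj C Z} else {})"

text \<open>\<open>[X] = 0\<close> in \<open>K_0(C)/Im K_0(A)\<close>: the preimage of \<open>Im K_0(A)\<close> in \<open>F(C)\<close> is the
  subgroup generated by \<open>R(C)\<close> and the generators \<open>\<langle>A\<rangle>\<close>, \<open>A \<in> A\<close>.\<close>
definition class_zero_mod_image :: "nat \<Rightarrow> ('o, 'm) addcat \<Rightarrow> ('o, 'm) seq set \<Rightarrow> 'o set \<Rightarrow> 'o \<Rightarrow> bool" where
  "class_zero_mod_image n C N A X \<longleftrightarrow>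
     gen C X \<in> zspan (K0_relations n C N \<union> {gen C Y | Y. Y \<in> A})"

end

theory Submission
  imports Defs "HOL-Library.Multiset"
begin

text \<open>
  Call lists \<open>xs\<close> and \<open>ys\<close> of objects commonly complemented if \<open>\<Oplus>xs \<oplus> \<Oplus>ws\<close> and
  \<open>\<Oplus>ys \<oplus> \<Oplus>ws\<close> both lie in \<open>\<A>\<close> for some list \<open>ws\<close>. Every element of the subgroup generated by
  \<open>R(\<C>)\<close> and the classes \<open>\<langle>A\<rangle>\<close>, \<open>A \<in> \<A>\<close>, has the form \<open>\<langle>xs\<rangle> - \<langle>ys\<rangle>\<close> with \<open>xs\<close>, \<open>ys\<close> commonly
  complemented: this is clear for \<open>\<langle>A\<rangle>\<close> and is preserved under differences, and for the Euler
  characteristic of an angle one takes its odd and its even terms. Indeed, adding to an angle the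
  elementary angle \<open>B = B\<close> in degrees \<open>j, j + 1\<close>, where \<open>A\<^sub>j \<oplus> B \<in> \<A>\<close> by density, puts the
  \<open>j\<close>-th term into \<open>\<A>\<close> and adds \<open>B\<close> to both the odd and the even terms; doing this for
  \<open>j = 1, \<dots>, n - 1\<close> and using completeness for the last term gives an angle in \<open>\<A>\<close>.

  Now if \<open>\<langle>X\<rangle> = \<langle>xs\<rangle> - \<langle>ys\<rangle>\<close>, then \<open>xs\<close> and \<open>X # ys\<close> agree up to isomorphism and order, so
  \<open>X \<oplus> \<Oplus>ys \<oplus> \<Oplus>ws\<close> and \<open>\<Oplus>ys \<oplus> \<Oplus>ws\<close> lie in \<open>\<A>\<close>. Completeness applied to
  \<open>X \<rightarrow> X \<oplus> Y \<rightarrow> Y \<rightarrow> 0 \<rightarrow> \<dots> \<rightarrow> 0\<close> shows that \<open>X \<in> \<A>\<close> whenever \<open>X \<oplus> Y \<in> \<A>\<close> and \<open>Y \<in> \<A>\<close>.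
\<close>

locale additive_category =
  fixes C :: "('o, 'm) addcat"
  assumes additive: "is_additive C"
begin

lemma preadditive: "is_preadditive C"
  using additive unfolding is_additive_def by blast

lemma category: "is_category C"
  using preadditive unfolding is_preadditive_def by blast

lemma hom_iff: "f \<in> hom C A B \<longleftrightarrow> f \<in> Mor C \<and> Dom C f = A \<and> Cod C f = B"
  by (auto simp: hom_def)

lemma Dom_in_Obj [simp]: "f \<in> Mor C \<Longrightarrow> Dom C f \<in> Obj C"
  and Cod_in_Obj [simp]: "f \<in> Mor C \<Longrightarrow> Cod C f \<in> Obj C"
  using category unfolding is_category_def by auto

lemma in_hom_Dom_Cod: "f \<in> Mor C \<Longrightarrow> f \<in> hom C (Dom C f) (Cod C f)"
  by (simp add: hom_iff)

lemma comp_in_hom: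
  assumes "f \<in> hom C A B" "g \<in> hom C B D"
  shows "cmp C g f \<in> hom C A D"
proof -
  have "A \<in> Obj C" "B \<in> Obj C" "D \<in> Obj C"
    using assms by (auto simp: hom_iff)
  then show ?thesis
    using category assms unfolding is_category_def by blast
qed

lemma comp_in_Mor [simp]: "f \<in> Mor C \<Longrightarrow> g \<in> Mor C \<Longrightarrow> Cod C f = Dom C g \<Longrightarrow> cmp C g f \<in> Mor C"
  and Dom_comp [simp]: "f \<in> Mor C \<Longrightarrow> g \<in> Mor C \<Longrightarrow> Cod C f = Dom C g \<Longrightarrow> Dom C (cmp C g f) = Dom C f"
  and Cod_comp [simp]: "f \<in> Mor C \<Longrightarrow> g \<in> Mor C \<Longrightarrow> Cod C f = Dom C g \<Longrightarrow> Cod C (cmp C g f) = Cod C g"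
  using comp_in_hom[of f "Dom C f" "Cod C f" g "Cod C g"] by (auto simp: hom_iff)

lemma comp_assoc [simp]:
  assumes "f \<in> Mor C" "g \<in> Mor C" "h \<in> Mor C" "Cod C f = Dom C g" "Cod C g = Dom C h"
  shows "cmp C (cmp C h g) f = cmp C h (cmp C g f)"
proof -
  have "f \<in> hom C (Dom C f) (Cod C f)" "g \<in> hom C (Cod C f) (Cod C g)" "h \<in> hom C (Cod C g) (Cod C h)"
    using assms by (auto simp: hom_iff)
  moreover have "Dom C f \<in> Obj C" "Cod C f \<in> Obj C" "Cod C g \<in> Obj C" "Cod C h \<in> Obj C"
    using assms by auto
  ultimately show ?thesis
    using category unfolding is_category_def by metis
qed

lemma id_in_hom: "A \<in> Obj C \<Longrightarrow> idm C A \<in> hom C A A"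
  using category unfolding is_category_def by blast

lemma id_in_Mor [simp]: "A \<in> Obj C \<Longrightarrow> idm C A \<in> Mor C"
  and Dom_id [simp]: "A \<in> Obj C \<Longrightarrow> Dom C (idm C A) = A"
  and Cod_id [simp]: "A \<in> Obj C \<Longrightarrow> Cod C (idm C A) = A"
  using id_in_hom by (auto simp: hom_iff)

lemma comp_id_right [simp]: "f \<in> Mor C \<Longrightarrow> Dom C f = A \<Longrightarrow> cmp C f (idm C A) = f"
  and comp_id_left [simp]: "f \<in> Mor C \<Longrightarrow> Cod C f = A \<Longrightarrow> cmp C (idm C A) f = f"
proof -
  assume "f \<in> Mor C"
  then have "Dom C f \<in> Obj C" "Cod C f \<in> Obj C" "f \<in> hom C (Dom C f) (Cod C f)"
    by (auto simp: hom_iff)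
  then have "cmp C f (idm C (Dom C f)) = f \<and> cmp C (idm C (Cod C f)) f = f"
    using category unfolding is_category_def by blast
  then show "Dom C f = A \<Longrightarrow> cmp C f (idm C A) = f" "Cod C f = A \<Longrightarrow> cmp C (idm C A) f = f"
    by auto
qed

lemma comp_assoc_subst:
  "cmp C g f = h \<Longrightarrow> f \<in> Mor C \<Longrightarrow> g \<in> Mor C \<Longrightarrow> Cod C f = Dom C g \<Longrightarrow> w \<in> Mor C
    \<Longrightarrow> Cod C w = Dom C f \<Longrightarrow> cmp C g (cmp C f w) = cmp C h w"
  by (metis comp_assoc)

lemma hom_group:
  assumes "A \<in> Obj C" "B \<in> Obj C"
  shows "mzero C A B \<in> hom C A B"
    and "f \<in> hom C A B \<Longrightarrow> mneg C f \<in> hom C A B"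
    and "f \<in> hom C A B \<Longrightarrow> madd C (mzero C A B) f = f"
    and "f \<in> hom C A B \<Longrightarrow> madd C (mneg C f) f = mzero C A B"
    and "f \<in> hom C A B \<Longrightarrow> g \<in> hom C A B \<Longrightarrow> madd C f g \<in> hom C A B"
    and "f \<in> hom C A B \<Longrightarrow> g \<in> hom C A B \<Longrightarrow> madd C f g = madd C g f"
    and "f \<in> hom C A B \<Longrightarrow> g \<in> hom C A B \<Longrightarrow> h \<in> hom C A B
      \<Longrightarrow> madd C (madd C f g) h = madd C f (madd C g h)"
  using preadditive assms unfolding is_preadditive_def by blast+

lemma zero_in_Mor [simp]: "A \<in> Obj C \<Longrightarrow> B \<in> Obj C \<Longrightarrow> mzero C A B \<in> Mor C"
  and Dom_zero [simp]: "A \<in> Obj C \<Longrightarrow> B \<in> Obj C \<Longrightarrow> Dom C (mzero C A B) = A"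
  and Cod_zero [simp]: "A \<in> Obj C \<Longrightarrow> B \<in> Obj C \<Longrightarrow> Cod C (mzero C A B) = B"
  using hom_group(1) by (auto simp: hom_iff)

lemma add_in_Mor [simp]:
    "f \<in> Mor C \<Longrightarrow> g \<in> Mor C \<Longrightarrow> Dom C f = Dom C g \<Longrightarrow> Cod C f = Cod C g \<Longrightarrow> madd C f g \<in> Mor C"
  and Dom_add [simp]:
    "f \<in> Mor C \<Longrightarrow> g \<in> Mor C \<Longrightarrow> Dom C f = Dom C g \<Longrightarrow> Cod C f = Cod C g \<Longrightarrow> Dom C (madd C f g) = Dom C f"
  and Cod_add [simp]:
    "f \<in> Mor C \<Longrightarrow> g \<in> Mor C \<Longrightarrow> Dom C f = Dom C g \<Longrightarrow> Cod C f = Cod C g \<Longrightarrow> Cod C (madd C f g) = Cod C f"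
  using hom_group(5)[OF Dom_in_Obj Cod_in_Obj in_hom_Dom_Cod, of f g] by (auto simp: hom_iff)

lemma neg_in_Mor [simp]: "f \<in> Mor C \<Longrightarrow> mneg C f \<in> Mor C"
  and Dom_neg [simp]: "f \<in> Mor C \<Longrightarrow> Dom C (mneg C f) = Dom C f"
  and Cod_neg [simp]: "f \<in> Mor C \<Longrightarrow> Cod C (mneg C f) = Cod C f"
  using hom_group(2)[OF Dom_in_Obj Cod_in_Obj in_hom_Dom_Cod] by (auto simp: hom_iff)

lemma add_commute:
  "f \<in> Mor C \<Longrightarrow> g \<in> Mor C \<Longrightarrow> Dom C f = Dom C g \<Longrightarrow> Cod C f = Cod C g \<Longrightarrow> madd C f g = madd C g f"
  using hom_group(6)[OF Dom_in_Obj Cod_in_Obj in_hom_Dom_Cod, of f g] by (simp add: hom_iff)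

lemma add_assoc:
  "f \<in> Mor C \<Longrightarrow> g \<in> Mor C \<Longrightarrow> h \<in> Mor C \<Longrightarrow> Dom C f = Dom C g \<Longrightarrow> Cod C f = Cod C g
    \<Longrightarrow> Dom C h = Dom C g \<Longrightarrow> Cod C h = Cod C g \<Longrightarrow> madd C (madd C f g) h = madd C f (madd C g h)"
  using hom_group(7)[OF Dom_in_Obj Cod_in_Obj in_hom_Dom_Cod, of f g h] by (simp add: hom_iff)

lemma add_zero_left [simp]: "f \<in> Mor C \<Longrightarrow> Dom C f = A \<Longrightarrow> Cod C f = B \<Longrightarrow> madd C (mzero C A B) f = f"
  using hom_group(3)[OF Dom_in_Obj Cod_in_Obj in_hom_Dom_Cod] by blast

lemma add_zero_right [simp]: "f \<in> Mor C \<Longrightarrow> Dom C f = A \<Longrightarrow> Cod C f = B \<Longrightarrow> madd C f (mzero C A B) = f"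
  by (subst add_commute) auto

lemma add_neg_left: "f \<in> Mor C \<Longrightarrow> madd C (mneg C f) f = mzero C (Dom C f) (Cod C f)"
  using hom_group(4)[OF Dom_in_Obj Cod_in_Obj in_hom_Dom_Cod] by blast

lemma comp_add_distrib:
  assumes "f \<in> hom C A B" "f' \<in> hom C A B" "g \<in> hom C B D" "g' \<in> hom C B D"
  shows "cmp C g (madd C f f') = madd C (cmp C g f) (cmp C g f')"
    and "cmp C (madd C g g') f = madd C (cmp C g f) (cmp C g' f)"
proof -
  have "A \<in> Obj C" "B \<in> Obj C" "D \<in> Obj C"
    using assms by (auto simp: hom_iff)
  then show "cmp C g (madd C f f') = madd C (cmp C g f) (cmp C g f')"
    and "cmp C (madd C g g') f = madd C (cmp C g f) (cmp C g' f)"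
    using preadditive assms unfolding is_preadditive_def by blast+
qed

lemma comp_add_right [simp]:
  "f \<in> Mor C \<Longrightarrow> f' \<in> Mor C \<Longrightarrow> g \<in> Mor C \<Longrightarrow> Dom C f = Dom C f' \<Longrightarrow> Cod C f = Cod C f'
    \<Longrightarrow> Cod C f = Dom C g \<Longrightarrow> cmp C g (madd C f f') = madd C (cmp C g f) (cmp C g f')"
  using comp_add_distrib(1)[of f "Dom C f" "Cod C f" f' g "Cod C g" g] by (simp add: hom_iff)

lemma comp_add_left [simp]:
  "f \<in> Mor C \<Longrightarrow> g' \<in> Mor C \<Longrightarrow> g \<in> Mor C \<Longrightarrow> Dom C g = Dom C g' \<Longrightarrow> Cod C g = Cod C g'
    \<Longrightarrow> Cod C f = Dom C g \<Longrightarrow> cmp C (madd C g g') f = madd C (cmp C g f) (cmp C g' f)"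
  using comp_add_distrib(2)[of f "Dom C f" "Cod C f" f g "Cod C g" g'] by (simp add: hom_iff)

lemma add_idem_eq_zero:
  assumes "x \<in> Mor C" "madd C x x = x"
  shows "x = mzero C (Dom C x) (Cod C x)"
proof -
  have "madd C (madd C (mneg C x) x) x = madd C (mneg C x) x"
    using assms by (simp add: add_assoc)
  then show ?thesis
    using assms by (simp add: add_neg_left)
qed

lemma comp_zero_right [simp]:
  assumes "g \<in> Mor C" "Dom C g = B" "A \<in> Obj C"
  shows "cmp C g (mzero C A B) = mzero C A (Cod C g)"
proof -
  let ?x = "cmp C g (mzero C A B)"
  have "madd C ?x ?x = cmp C g (madd C (mzero C A B) (mzero C A B))"
    using assms by (subst comp_add_right) auto
  then have "madd C ?x ?x = ?x"
    using assms Dom_in_Obj[OF assms(1)] by simp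
  then show ?thesis
    using add_idem_eq_zero[of ?x] assms Dom_in_Obj[OF assms(1)] by simp
qed

lemma comp_zero_left [simp]:
  assumes "f \<in> Mor C" "Cod C f = B" "D \<in> Obj C"
  shows "cmp C (mzero C B D) f = mzero C (Dom C f) D"
proof -
  let ?x = "cmp C (mzero C B D) f"
  have "madd C ?x ?x = cmp C (madd C (mzero C B D) (mzero C B D)) f"
    using assms by (subst comp_add_left) auto
  then have "madd C ?x ?x = ?x"
    using assms Cod_in_Obj[OF assms(1)] by simp
  then show ?thesis
    using add_idem_eq_zero[of ?x] assms Cod_in_Obj[OF assms(1)] by simp
qed

lemma is_zero_obj_in_Obj: "is_zero_obj C Z \<Longrightarrow> Z \<in> Obj C"
  by (simp add: is_zero_obj_def)

lemma zero_obj_mor_into_unique: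
  assumes "is_zero_obj C Z" "f \<in> Mor C" "g \<in> Mor C" "Dom C f = Dom C g" "Cod C f = Z" "Cod C g = Z"
  shows "f = g"
proof -
  have "f \<in> hom C (Dom C f) Z" "g \<in> hom C (Dom C f) Z" "Dom C f \<in> Obj C"
    using assms by (auto simp: hom_iff)
  then show ?thesis
    using assms(1) unfolding is_zero_obj_def by blast
qed

lemma zero_obj_mor_from_unique:
  assumes "is_zero_obj C Z" "f \<in> Mor C" "g \<in> Mor C" "Cod C f = Cod C g" "Dom C f = Z" "Dom C g = Z"
  shows "f = g"
proof -
  have "f \<in> hom C Z (Cod C f)" "g \<in> hom C Z (Cod C f)" "Cod C f \<in> Obj C"
    using assms by (auto simp: hom_iff)
  then show ?thesis
    using assms(1) unfolding is_zero_obj_def by blast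
qed

lemma zero_obj_iff_id_eq_zero:
  assumes "Z \<in> Obj C"
  shows "is_zero_obj C Z \<longleftrightarrow> idm C Z = mzero C Z Z"
proof
  assume "is_zero_obj C Z"
  then show "idm C Z = mzero C Z Z"
    using assms by (intro zero_obj_mor_into_unique) auto
next
  assume id_zero: "idm C Z = mzero C Z Z"
  have "f = mzero C Z A" if "f \<in> hom C Z A" for f A
    using that id_zero comp_id_right[of f Z] by (auto simp: hom_iff)
  moreover have "f = mzero C A Z" if "f \<in> hom C A Z" for f A
    using that id_zero comp_id_left[of f Z] by (auto simp: hom_iff)
  ultimately show "is_zero_obj C Z"
    unfolding is_zero_obj_def using assms hom_group(1) by blast
qed

lemma inverse_pair_iso:
  assumes "f \<in> Mor C" "g \<in> Mor C" "Dom C f = A" "Cod C f = B" "Dom C g = B" "Cod C g = A"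
    "cmp C g f = idm C A" "cmp C f g = idm C B"
  shows "is_iso C f" and "isomorphic C A B"
proof -
  show "is_iso C f"
    unfolding is_iso_def using assms by (auto simp: hom_iff)
  moreover have "f \<in> hom C A B"
    using assms by (simp add: hom_iff)
  ultimately show "isomorphic C A B"
    unfolding isomorphic_def by blast
qed

lemma isomorphicE:
  assumes "isomorphic C A B"
  obtains f g where "f \<in> Mor C" "g \<in> Mor C" "Dom C f = A" "Cod C f = B" "Dom C g = B" "Cod C g = A"
    "cmp C g f = idm C A" "cmp C f g = idm C B"
proof -
  obtain f where f: "f \<in> hom C A B" "is_iso C f"
    using assms unfolding isomorphic_def by blast
  then obtain g where "g \<in> hom C (Cod C f) (Dom C f)"
    "cmp C g f = idm C (Dom C f)" "cmp C f g = idm C (Cod C f)"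
    unfolding is_iso_def by blast
  then show ?thesis
    using that f by (auto simp: hom_iff)
qed

lemma isomorphic_in_Obj: "isomorphic C A B \<Longrightarrow> A \<in> Obj C \<and> B \<in> Obj C"
  by (erule isomorphicE) (metis Cod_in_Obj Dom_in_Obj)

lemma isomorphic_refl: "A \<in> Obj C \<Longrightarrow> isomorphic C A A"
  by (rule inverse_pair_iso(2)[of "idm C A" "idm C A"]) auto

lemma isomorphic_sym: "isomorphic C A B \<Longrightarrow> isomorphic C B A"
  by (erule isomorphicE) (rule inverse_pair_iso(2), assumption+)

lemma isomorphic_trans [trans]:
  assumes "isomorphic C A B" "isomorphic C B D"
  shows "isomorphic C A D"
proof -
  obtain f g where f: "f \<in> Mor C" "g \<in> Mor C" "Dom C f = A" "Cod C f = B" "Dom C g = B" "Cod C g = A"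
    "cmp C g f = idm C A" "cmp C f g = idm C B"
    using assms(1) by (rule isomorphicE)
  obtain f' g' where f': "f' \<in> Mor C" "g' \<in> Mor C" "Dom C f' = B" "Cod C f' = D" "Dom C g' = D"
    "Cod C g' = B" "cmp C g' f' = idm C B" "cmp C f' g' = idm C D"
    using assms(2) by (rule isomorphicE)
  have "cmp C (cmp C g g') (cmp C f' f) = cmp C g (cmp C (cmp C g' f') f)"
    using f f' by (simp add: comp_assoc_subst[OF f'(7)])
  then have "cmp C (cmp C g g') (cmp C f' f) = idm C A"
    using f f' by simp
  moreover have "cmp C (cmp C f' f) (cmp C g g') = cmp C f' (cmp C (cmp C f g) g')"
    using f f' by (simp add: comp_assoc_subst[OF f(8)])
  then have "cmp C (cmp C f' f) (cmp C g g') = idm C D"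
    using f f' by simp
  ultimately show ?thesis
    using f f' by (intro inverse_pair_iso(2)[of "cmp C f' f" "cmp C g g'"]) auto
qed

lemma id_is_iso: "A \<in> Obj C \<Longrightarrow> is_iso C (idm C A)"
  by (rule inverse_pair_iso(1)[of _ "idm C A"]) auto

lemma zero_mor_between_zero_objs_iso:
  assumes "is_zero_obj C Z" "is_zero_obj C Z'"
  shows "is_iso C (mzero C Z Z')" and "isomorphic C Z Z'"
proof -
  have "cmp C (mzero C Z' Z) (mzero C Z Z') = idm C Z" "cmp C (mzero C Z Z') (mzero C Z' Z) = idm C Z'"
    using assms is_zero_obj_in_Obj by (auto intro: zero_obj_mor_into_unique)
  then show "is_iso C (mzero C Z Z')" and "isomorphic C Z Z'"
    using inverse_pair_iso[of "mzero C Z Z'" "mzero C Z' Z" Z Z'] assms is_zero_obj_in_Obj by auto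
qed

lemma biproductD:
  assumes "is_biproduct C X Y S i1 i2 p1 p2"
  shows "X \<in> Obj C" "Y \<in> Obj C" "S \<in> Obj C"
    "i1 \<in> Mor C" "Dom C i1 = X" "Cod C i1 = S"
    "i2 \<in> Mor C" "Dom C i2 = Y" "Cod C i2 = S"
    "p1 \<in> Mor C" "Dom C p1 = S" "Cod C p1 = X"
    "p2 \<in> Mor C" "Dom C p2 = S" "Cod C p2 = Y"
    "cmp C p1 i1 = idm C X" "cmp C p2 i2 = idm C Y"
    "cmp C p1 i2 = mzero C Y X" "cmp C p2 i1 = mzero C X Y"
    "madd C (cmp C i1 p1) (cmp C i2 p2) = idm C S"
  using assms unfolding is_biproduct_def hom_iff by auto

lemma biproduct_proj_inj:
  assumes "is_biproduct C X Y S i1 i2 p1 p2" "u \<in> Mor C"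
  shows "Cod C u = X \<Longrightarrow> cmp C p1 (cmp C i1 u) = u"
    and "Cod C u = Y \<Longrightarrow> cmp C p2 (cmp C i2 u) = u"
    and "Cod C u = Y \<Longrightarrow> cmp C p1 (cmp C i2 u) = mzero C (Dom C u) X"
    and "Cod C u = X \<Longrightarrow> cmp C p2 (cmp C i1 u) = mzero C (Dom C u) Y"
  using biproductD[OF assms(1)] assms(2)
    comp_assoc[of u i1 p1] comp_assoc[of u i2 p2] comp_assoc[of u i2 p1] comp_assoc[of u i1 p2]
  by simp_all

lemma biproduct_eqI:
  assumes b: "is_biproduct C X Y S i1 i2 p1 p2"
    and "u \<in> Mor C" "v \<in> Mor C" "Dom C u = S" "Dom C v = S" "Cod C u = Cod C v"
    and eq1: "cmp C u i1 = cmp C v i1" and eq2: "cmp C u i2 = cmp C v i2"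
  shows "u = v"
proof -
  note b = biproductD[OF b]
  have "u = cmp C u (madd C (cmp C i1 p1) (cmp C i2 p2))"
    using b assms by simp
  also have "\<dots> = madd C (cmp C u (cmp C i1 p1)) (cmp C u (cmp C i2 p2))"
    using b assms by (subst comp_add_right) auto
  also have "\<dots> = madd C (cmp C v (cmp C i1 p1)) (cmp C v (cmp C i2 p2))"
    using b assms by (simp add: comp_assoc_subst[OF eq1] comp_assoc_subst[OF eq2])
  also have "\<dots> = cmp C v (madd C (cmp C i1 p1) (cmp C i2 p2))"
    using b assms by (subst comp_add_right) auto
  also have "\<dots> = v"
    using b assms by simp
  finally show ?thesis .
qed

lemma biproduct_diag:
  assumes a: "is_biproduct C Xa Ya Da a1 a2 b1 b2" and b: "is_biproduct C Xb Yb Db c1 c2 d1 d2"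
    and x: "x \<in> Mor C" "Dom C x = Xa" "Cod C x = Xb"
    and y: "y \<in> Mor C" "Dom C y = Ya" "Cod C y = Yb"
    and s: "s = madd C (cmp C c1 (cmp C x b1)) (cmp C c2 (cmp C y b2))"
  shows "s \<in> Mor C" "Dom C s = Da" "Cod C s = Db"
    "cmp C s a1 = cmp C c1 x" "cmp C s a2 = cmp C c2 y"
    "cmp C d1 s = cmp C x b1" "cmp C d2 s = cmp C y b2"
proof -
  note ba = biproductD[OF a] and bb = biproductD[OF b]
  show "s \<in> Mor C" "Dom C s = Da" "Cod C s = Db"
    using s ba bb x y by auto
  show "cmp C s a1 = cmp C c1 x" "cmp C s a2 = cmp C c2 y"
    using s ba bb x y by simp_all
  show "cmp C d1 s = cmp C x b1" "cmp C d2 s = cmp C y b2"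
    using s ba bb x y by (simp_all add: biproduct_proj_inj[OF b])
qed

lemma biproduct_isomorphic:
  assumes a: "is_biproduct C X Y S i1 i2 p1 p2" and b: "is_biproduct C X' Y' S' j1 j2 q1 q2"
    and "isomorphic C X X'" "isomorphic C Y Y'"
  shows "isomorphic C S S'"
proof -
  obtain f f' where f: "f \<in> Mor C" "f' \<in> Mor C" "Dom C f = X" "Cod C f = X'" "Dom C f' = X'"
    "Cod C f' = X" "cmp C f' f = idm C X" "cmp C f f' = idm C X'"
    using assms(3) by (rule isomorphicE)
  obtain g g' where g: "g \<in> Mor C" "g' \<in> Mor C" "Dom C g = Y" "Cod C g = Y'" "Dom C g' = Y'"
    "Cod C g' = Y" "cmp C g' g = idm C Y" "cmp C g g' = idm C Y'"
    using assms(4) by (rule isomorphicE)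
  define h where "h = madd C (cmp C j1 (cmp C f p1)) (cmp C j2 (cmp C g p2))"
  define k where "k = madd C (cmp C i1 (cmp C f' q1)) (cmp C i2 (cmp C g' q2))"
  note H = biproduct_diag[OF a b f(1,3,4) g(1,3,4) h_def]
  note K = biproduct_diag[OF b a f(2,5,6) g(2,5,6) k_def]
  note ba = biproductD[OF a] and bb = biproductD[OF b]
  have "cmp C k h = idm C S"
    by (rule biproduct_eqI[OF a])
      (use H K ba bb f g in \<open>simp_all add: comp_assoc_subst[OF K(4)] comp_assoc_subst[OF K(5)]\<close>)
  moreover have "cmp C h k = idm C S'"
    by (rule biproduct_eqI[OF b])
      (use H K ba bb f g in \<open>simp_all add: comp_assoc_subst[OF H(4)] comp_assoc_subst[OF H(5)]\<close>)
  ultimately show ?thesis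
    using H K by (intro inverse_pair_iso(2)[of h k]) auto
qed

lemma biproduct_swap: "is_biproduct C X Y S i1 i2 p1 p2 \<Longrightarrow> is_biproduct C Y X S i2 i1 p2 p1"
  unfolding is_biproduct_def hom_iff by (auto simp: add_commute)

lemma biproduct_zero_right:
  assumes "is_zero_obj C Z" "X \<in> Obj C"
  shows "is_biproduct C X Z X (idm C X) (mzero C Z X) (idm C X) (mzero C X Z)"
proof -
  have Z: "Z \<in> Obj C"
    using assms is_zero_obj_in_Obj by auto
  have "cmp C (mzero C X Z) (mzero C Z X) = idm C Z"
    by (rule zero_obj_mor_into_unique[OF assms(1)]) (use Z assms in auto)
  then show ?thesis
    unfolding is_biproduct_def hom_iff using Z assms by auto
qed

lemma biproduct_assoc:
  assumes a: "is_biproduct C X Y S a1 a2 b1 b2" and k: "is_biproduct C S Z T k1 k2 q1 q2"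
    and j: "is_biproduct C Y Z U j1 j2 r1 r2"
  shows "is_biproduct C X U T (cmp C k1 a1) (madd C (cmp C k1 (cmp C a2 r1)) (cmp C k2 r2))
           (cmp C b1 q1) (madd C (cmp C j1 (cmp C b2 q1)) (cmp C j2 q2))"
proof -
  note ba = biproductD[OF a] and bk = biproductD[OF k] and bj = biproductD[OF j]
  note simps = biproduct_proj_inj[OF a] biproduct_proj_inj[OF k] biproduct_proj_inj[OF j]
    comp_assoc_subst[OF ba(16)] comp_assoc_subst[OF ba(17)] comp_assoc_subst[OF ba(18)]
    comp_assoc_subst[OF ba(19)] comp_assoc_subst[OF bk(16)] comp_assoc_subst[OF bk(17)]
    comp_assoc_subst[OF bk(18)] comp_assoc_subst[OF bk(19)] comp_assoc_subst[OF bj(16)]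
    comp_assoc_subst[OF bj(17)] comp_assoc_subst[OF bj(18)] comp_assoc_subst[OF bj(19)]
  let ?i = "madd C (cmp C k1 (cmp C a2 r1)) (cmp C k2 r2)"
  let ?p = "madd C (cmp C j1 (cmp C b2 q1)) (cmp C j2 q2)"
  have i: "?i \<in> Mor C" "Dom C ?i = U" "Cod C ?i = T" and p: "?p \<in> Mor C" "Dom C ?p = T" "Cod C ?p = U"
    using ba bk bj by auto
  have "cmp C (cmp C b1 q1) (cmp C k1 a1) = idm C X"
    "cmp C (cmp C b1 q1) ?i = mzero C U X" "cmp C ?p (cmp C k1 a1) = mzero C X U"
    using ba bk bj by (simp_all add: biproduct_proj_inj[OF a] biproduct_proj_inj[OF k]
      biproduct_proj_inj[OF j])
  moreover have "cmp C ?p ?i = idm C U"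
    by (rule biproduct_eqI[OF j]) (use ba bk bj in \<open>simp_all add: simps\<close>)
  moreover have "madd C (cmp C (cmp C k1 a1) (cmp C b1 q1)) (cmp C ?i ?p) = idm C T"
  proof (rule biproduct_eqI[OF k])
    show "cmp C (madd C (cmp C (cmp C k1 a1) (cmp C b1 q1)) (cmp C ?i ?p)) k1 = cmp C (idm C T) k1"
      by (rule biproduct_eqI[OF a]) (use ba bk bj in \<open>simp_all add: simps\<close>)
  qed (use ba bk bj in \<open>simp_all add: simps\<close>)
  ultimately show ?thesis
    unfolding is_biproduct_def hom_iff using ba bk bj i p by auto
qed

definition dsum :: "'o \<Rightarrow> 'o \<Rightarrow> 'o" where
  "dsum X Y = (SOME S. \<exists>i1 i2 p1 p2. is_biproduct C X Y S i1 i2 p1 p2)"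

lemma dsum_biproduct:
  "X \<in> Obj C \<Longrightarrow> Y \<in> Obj C \<Longrightarrow> \<exists>i1 i2 p1 p2. is_biproduct C X Y (dsum X Y) i1 i2 p1 p2"
  unfolding dsum_def by (rule someI_ex) (use additive in \<open>auto simp: is_additive_def\<close>)

lemma dsum_in_Obj [simp]: "X \<in> Obj C \<Longrightarrow> Y \<in> Obj C \<Longrightarrow> dsum X Y \<in> Obj C"
  using dsum_biproduct biproductD(3) by blast

lemma biproduct_isomorphic_dsum:
  assumes b: "is_biproduct C X Y S i1 i2 p1 p2"
  shows "isomorphic C S (dsum X Y)"
proof -
  obtain j1 j2 q1 q2 where "is_biproduct C X Y (dsum X Y) j1 j2 q1 q2"
    using dsum_biproduct biproductD(1,2)[OF b] by blast
  then show ?thesis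
    using biproduct_isomorphic[OF b] isomorphic_refl biproductD(1,2)[OF b] by blast
qed

lemma dsum_cong:
  assumes "isomorphic C X X'" "isomorphic C Y Y'"
  shows "isomorphic C (dsum X Y) (dsum X' Y')"
proof -
  obtain j1 j2 q1 q2 where "is_biproduct C X Y (dsum X Y) j1 j2 q1 q2"
    using dsum_biproduct isomorphic_in_Obj assms by blast
  moreover obtain k1 k2 r1 r2 where "is_biproduct C X' Y' (dsum X' Y') k1 k2 r1 r2"
    using dsum_biproduct isomorphic_in_Obj assms by blast
  ultimately show ?thesis
    using biproduct_isomorphic assms by blast
qed

lemma dsum_commute:
  assumes "X \<in> Obj C" "Y \<in> Obj C"
  shows "isomorphic C (dsum X Y) (dsum Y X)"
proof -
  obtain j1 j2 q1 q2 where "is_biproduct C X Y (dsum X Y) j1 j2 q1 q2"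
    using dsum_biproduct assms by blast
  then show ?thesis
    using biproduct_swap biproduct_isomorphic_dsum by blast
qed

lemma dsum_assoc:
  assumes "X \<in> Obj C" "Y \<in> Obj C" "Z \<in> Obj C"
  shows "isomorphic C (dsum (dsum X Y) Z) (dsum X (dsum Y Z))"
proof -
  obtain a1 a2 b1 b2 where a: "is_biproduct C X Y (dsum X Y) a1 a2 b1 b2"
    using dsum_biproduct assms by blast
  obtain k1 k2 q1 q2 where k: "is_biproduct C (dsum X Y) Z (dsum (dsum X Y) Z) k1 k2 q1 q2"
    using dsum_biproduct[of "dsum X Y" Z] assms by auto
  obtain j1 j2 r1 r2 where j: "is_biproduct C Y Z (dsum Y Z) j1 j2 r1 r2"
    using dsum_biproduct assms by blast
  show ?thesis
    by (rule biproduct_isomorphic_dsum[OF biproduct_assoc[OF a k j]])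
qed

lemma termwise_biproducts:
  assumes "\<And>i. i \<in> I \<Longrightarrow> X i \<in> Obj C \<and> Y i \<in> Obj C"
  obtains D i1 i2 p1 p2
  where "\<And>i. i \<in> I \<Longrightarrow> is_biproduct C (X i) (Y i) (D i) (i1 i) (i2 i) (p1 i) (p2 i)"
proof -
  have "\<forall>i\<in>I. \<exists>q. is_biproduct C (X i) (Y i) (fst q) (fst (snd q)) (fst (snd (snd q)))
      (fst (snd (snd (snd q)))) (snd (snd (snd (snd q))))"
    using dsum_biproduct assms by fastforce
  then have "\<exists>q. \<forall>i\<in>I. is_biproduct C (X i) (Y i) (fst (q i)) (fst (snd (q i)))
      (fst (snd (snd (q i)))) (fst (snd (snd (snd (q i))))) (snd (snd (snd (snd (q i)))))"
    by (rule bchoice)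
  then obtain q where "\<forall>i\<in>I. is_biproduct C (X i) (Y i) (fst (q i)) (fst (snd (q i)))
      (fst (snd (snd (q i)))) (fst (snd (snd (snd (q i))))) (snd (snd (snd (snd (q i)))))"
    by blast
  then show ?thesis
    by (intro that[of "\<lambda>i. fst (q i)" "\<lambda>i. fst (snd (q i))" "\<lambda>i. fst (snd (snd (q i)))"
          "\<lambda>i. fst (snd (snd (snd (q i))))" "\<lambda>i. snd (snd (snd (snd (q i))))"]) blast
qed

definition zero_obj :: 'o where
  "zero_obj = (SOME Z. is_zero_obj C Z)"

lemma is_zero_obj_zero_obj: "is_zero_obj C zero_obj"
  unfolding zero_obj_def by (rule someI_ex) (use additive in \<open>simp add: is_additive_def\<close>)

lemma zero_obj_in_Obj [simp]: "zero_obj \<in> Obj C"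
  using is_zero_obj_zero_obj is_zero_obj_in_Obj by blast

lemma dsum_zero_right: "X \<in> Obj C \<Longrightarrow> isomorphic C (dsum X zero_obj) X"
  using biproduct_isomorphic_dsum[OF biproduct_zero_right[OF is_zero_obj_zero_obj]] isomorphic_sym
  by blast

lemma dsum_zero_left: "X \<in> Obj C \<Longrightarrow> isomorphic C (dsum zero_obj X) X"
  using dsum_zero_right dsum_commute isomorphic_trans zero_obj_in_Obj by blast

fun dsum_list :: "'o list \<Rightarrow> 'o" where
  "dsum_list [] = zero_obj"
| "dsum_list (x # xs) = dsum x (dsum_list xs)"

lemma dsum_list_in_Obj [simp]: "set xs \<subseteq> Obj C \<Longrightarrow> dsum_list xs \<in> Obj C"
  by (induction xs) auto

lemma dsum_list_cong: "list_all2 (isomorphic C) xs ys \<Longrightarrow> isomorphic C (dsum_list xs) (dsum_list ys)"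
  by (induction rule: list_all2_induct) (auto intro: dsum_cong isomorphic_refl)

lemma dsum_list_swap:
  assumes "x \<in> Obj C" "y \<in> Obj C" "set l \<subseteq> Obj C"
  shows "isomorphic C (dsum_list (x # y # l)) (dsum_list (y # x # l))"
proof -
  have L: "dsum_list l \<in> Obj C"
    using assms by simp
  have "isomorphic C (dsum x (dsum y (dsum_list l))) (dsum (dsum x y) (dsum_list l))"
    using dsum_assoc isomorphic_sym assms L by blast
  also have "isomorphic C \<dots> (dsum (dsum y x) (dsum_list l))"
    using dsum_cong dsum_commute isomorphic_refl assms L by blast
  also have "isomorphic C \<dots> (dsum y (dsum x (dsum_list l)))"
    using dsum_assoc assms L by blast
  finally show ?thesis
    by simp
qed

lemma dsum_list_move_to_front:
  "x \<in> Obj C \<Longrightarrow> set l1 \<subseteq> Obj C \<Longrightarrow> set l2 \<subseteq> Obj C \<Longrightarrow>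
    isomorphic C (dsum_list (l1 @ x # l2)) (dsum_list (x # l1 @ l2))"
proof (induction l1)
  case Nil
  then show ?case
    by (simp add: isomorphic_refl)
next
  case (Cons a l1)
  have "isomorphic C (dsum_list (a # l1 @ x # l2)) (dsum_list (a # x # l1 @ l2))"
    using Cons by (simp add: dsum_cong isomorphic_refl)
  also have "isomorphic C \<dots> (dsum_list (x # a # l1 @ l2))"
    using Cons by (intro dsum_list_swap) auto
  finally show ?case
    by simp
qed

lemma dsum_list_perm:
  "mset xs = mset ys \<Longrightarrow> set xs \<subseteq> Obj C \<Longrightarrow> isomorphic C (dsum_list xs) (dsum_list ys)"
proof (induction xs arbitrary: ys)
  case Nil
  then show ?case
    by (simp add: isomorphic_refl)
next
  case (Cons x xs)
  have set_eq: "set (x # xs) = set ys"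
    using Cons.prems(1) by (metis set_mset_mset)
  then obtain l1 l2 where ys: "ys = l1 @ x # l2"
    by (metis list.set_intros(1) split_list)
  have "isomorphic C (dsum_list (x # xs)) (dsum_list (x # l1 @ l2))"
    using Cons ys by (simp add: dsum_cong isomorphic_refl)
  also have "isomorphic C \<dots> (dsum_list ys)"
  proof -
    have "set l1 \<subseteq> Obj C" "set l2 \<subseteq> Obj C" "x \<in> Obj C"
      using Cons.prems(2) set_eq ys by auto
    then show ?thesis
      using dsum_list_move_to_front[of x l1 l2] ys by (simp add: isomorphic_sym)
  qed
  finally show ?case .
qed

lemma dsum_list_append:
  "set xs \<subseteq> Obj C \<Longrightarrow> set ys \<subseteq> Obj C \<Longrightarrow>
    isomorphic C (dsum_list (xs @ ys)) (dsum (dsum_list xs) (dsum_list ys))"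
proof (induction xs)
  case Nil
  then show ?case
    using dsum_zero_left isomorphic_sym by simp
next
  case (Cons x xs)
  have "isomorphic C (dsum_list (x # xs @ ys)) (dsum x (dsum (dsum_list xs) (dsum_list ys)))"
    using Cons by (simp add: dsum_cong isomorphic_refl)
  also have "isomorphic C \<dots> (dsum (dsum x (dsum_list xs)) (dsum_list ys))"
    using Cons dsum_assoc isomorphic_sym by simp
  finally show ?case
    by simp
qed

lemma dsum_list_biproduct_head:
  assumes b: "is_biproduct C X Y D i1 i2 p1 p2" and l: "set l \<subseteq> Obj C"
  shows "isomorphic C (dsum_list (D # l)) (dsum_list (X # Y # l))"
proof -
  have "isomorphic C (dsum_list (D # l)) (dsum (dsum X Y) (dsum_list l))"
    using biproduct_isomorphic_dsum[OF b] l by (simp add: dsum_cong isomorphic_refl)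
  also have "isomorphic C \<dots> (dsum_list (X # Y # l))"
    using dsum_assoc biproductD(1,2)[OF b] l by simp
  finally show ?thesis .
qed

definition class_sum :: "'o list \<Rightarrow> 'o set \<Rightarrow> int" where
  "class_sum xs K = (\<Sum>x\<leftarrow>xs. gen C x K)"

lemma class_sum_Nil [simp]: "class_sum [] K = 0"
  and class_sum_Cons [simp]: "class_sum (x # xs) K = gen C x K + class_sum xs K"
  and class_sum_append [simp]: "class_sum (xs @ ys) K = class_sum xs K + class_sum ys K"
  by (simp_all add: class_sum_def)

lemma class_sum_nonneg: "class_sum xs K \<ge> 0"
  by (induction xs) (simp_all add: gen_def)

lemma class_sum_eq_0: "(\<And>y. y \<in> set ys \<Longrightarrow> K \<noteq> iso_class C y) \<Longrightarrow> class_sum ys K = 0"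
  by (induction ys) (simp_all add: gen_def)

lemma class_sum_eq_imp_isomorphic_perm:
  assumes "class_sum xs = class_sum ys" "set xs \<subseteq> Obj C" "set ys \<subseteq> Obj C"
  shows "\<exists>zs. mset zs = mset ys \<and> list_all2 (isomorphic C) xs zs"
  using assms
proof (induction xs arbitrary: ys)
  case Nil
  have "ys = []"
  proof (rule ccontr)
    assume "ys \<noteq> []"
    then obtain y l where "ys = y # l"
      by (cases ys) auto
    then have "class_sum ys (iso_class C y) \<ge> 1"
      using Nil.prems(3) class_sum_nonneg[of l] isomorphic_refl by (simp add: gen_def)
    then show False
      using Nil.prems(1) by (metis class_sum_Nil not_one_le_zero)
  qed
  then show ?case
    by simp
next
  case (Cons x xs)
  have x: "x \<in> Obj C"
    using Cons.prems(2) by simp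
  have "class_sum ys (iso_class C x) \<noteq> 0"
    using fun_cong[OF Cons.prems(1), of "iso_class C x"] class_sum_nonneg[of xs "iso_class C x"]
    by (simp add: gen_def)
  then obtain y where y: "y \<in> set ys" "iso_class C x = iso_class C y"
    using class_sum_eq_0 by blast
  then have xy: "isomorphic C x y"
    using x isomorphic_refl isomorphic_sym unfolding iso_class_def by blast
  obtain l1 l2 where ys: "ys = l1 @ y # l2"
    using y(1) by (meson split_list)
  have "class_sum xs = class_sum (l1 @ l2)"
    using Cons.prems(1) y(2) unfolding ys by (auto simp: fun_eq_iff gen_def)
  moreover have "set xs \<subseteq> Obj C" "set (l1 @ l2) \<subseteq> Obj C"
    using Cons.prems(2,3) ys by auto
  ultimately obtain zs where "mset zs = mset (l1 @ l2)" "list_all2 (isomorphic C) xs zs"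
    using Cons.IH by blast
  then show ?case
    using xy ys by (intro exI[of _ "y # zs"]) auto
qed

end

text \<open>The \<open>(i + 1)\<close>-st term of a sequence in the convention \<open>A\<^sub>n\<^sub>+\<^sub>1 = \<Sigma> A\<^sub>1\<close>.\<close>
definition next_term :: "nat \<Rightarrow> (nat \<Rightarrow> 'a) \<Rightarrow> ('a \<Rightarrow> 'a) \<Rightarrow> nat \<Rightarrow> 'a" where
  "next_term n F G i = (if i < n then F (Suc i) else G (F 1))"

locale n_angulated_category = additive_category C for C :: "('o, 'm) addcat" +
  fixes n :: nat and SO :: "'o \<Rightarrow> 'o" and SM :: "'m \<Rightarrow> 'm" and N :: "('o, 'm) seq set"
  assumes n_ge_3: "n \<ge> 3" and n_angulated: "n_angulated n C SO SM N"
begin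

lemma automorphism: "is_automorphism C SO SM"
  using n_angulated unfolding n_angulated_def by (elim conjE) blast

lemma angle_is_seq: "S \<in> N \<Longrightarrow> is_seq n C SO S"
  using n_angulated unfolding n_angulated_def by (elim conjE) blast

lemma angle_dsum:
  "is_seq_dsum n C SO SM S X Y \<Longrightarrow> is_seq n C SO S \<Longrightarrow> X \<in> N \<Longrightarrow> Y \<in> N \<Longrightarrow> S \<in> N"
  using n_angulated angle_is_seq unfolding n_angulated_def by (elim conjE) blast

lemma angle_iso: "S \<in> N \<Longrightarrow> seq_iso n C SO SM S T \<phi> \<Longrightarrow> T \<in> N"
  using n_angulated unfolding n_angulated_def by (elim conjE) blast

lemma trivial_angle: "A \<in> Obj C \<Longrightarrow> is_zero_obj C Z \<Longrightarrow> trivial_seq n C SO A Z \<in> N"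
  using n_angulated unfolding n_angulated_def by (elim conjE) blast

lemma angle_of_left_rot_angle: "is_seq n C SO S \<Longrightarrow> left_rot n C SO SM S \<in> N \<Longrightarrow> S \<in> N"
  using n_angulated unfolding n_angulated_def by (elim conjE) blast

lemma SO_in_Obj [simp]: "A \<in> Obj C \<Longrightarrow> SO A \<in> Obj C"
  using automorphism unfolding is_automorphism_def bij_betw_def by blast

lemma SM_in_Mor [simp]: "f \<in> Mor C \<Longrightarrow> SM f \<in> Mor C"
  using automorphism unfolding is_automorphism_def bij_betw_def by blast

lemma Dom_SM [simp]: "f \<in> Mor C \<Longrightarrow> Dom C (SM f) = SO (Dom C f)"
  and Cod_SM [simp]: "f \<in> Mor C \<Longrightarrow> Cod C (SM f) = SO (Cod C f)"
  using automorphism unfolding is_automorphism_def by blast+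

lemma SM_id [simp]: "A \<in> Obj C \<Longrightarrow> SM (idm C A) = idm C (SO A)"
  using automorphism unfolding is_automorphism_def by blast

lemma SM_comp [simp]:
  assumes "f \<in> Mor C" "g \<in> Mor C" "Cod C f = Dom C g"
  shows "SM (cmp C g f) = cmp C (SM g) (SM f)"
proof -
  have "f \<in> hom C (Dom C f) (Cod C f)" "g \<in> hom C (Cod C f) (Cod C g)"
    "Dom C f \<in> Obj C" "Cod C f \<in> Obj C" "Cod C g \<in> Obj C"
    using assms by (auto simp: hom_iff)
  then show ?thesis
    using automorphism unfolding is_automorphism_def by blast
qed

lemma SM_add [simp]:
  assumes "f \<in> Mor C" "g \<in> Mor C" "Dom C f = Dom C g" "Cod C f = Cod C g"
  shows "SM (madd C f g) = madd C (SM f) (SM g)"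
proof -
  have "f \<in> hom C (Dom C f) (Cod C f)" "g \<in> hom C (Dom C f) (Cod C f)"
    "Dom C f \<in> Obj C" "Cod C f \<in> Obj C"
    using assms by (auto simp: hom_iff)
  then show ?thesis
    using automorphism unfolding is_automorphism_def by blast
qed

lemma SM_zero [simp]:
  assumes "A \<in> Obj C" "B \<in> Obj C"
  shows "SM (mzero C A B) = mzero C (SO A) (SO B)"
proof -
  let ?x = "SM (mzero C A B)"
  have "madd C ?x ?x = SM (madd C (mzero C A B) (mzero C A B))"
    using assms by (subst SM_add) auto
  then have "madd C ?x ?x = ?x"
    using assms by simp
  then show ?thesis
    using add_idem_eq_zero[of ?x] assms by simp
qed

lemma zero_obj_SO: "is_zero_obj C Z \<Longrightarrow> is_zero_obj C (SO Z)"
  using zero_obj_iff_id_eq_zero is_zero_obj_in_Obj by (metis SM_id SM_zero SO_in_Obj)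

lemma biproduct_SM:
  assumes "is_biproduct C X Y D i1 i2 p1 p2"
  shows "is_biproduct C (SO X) (SO Y) (SO D) (SM i1) (SM i2) (SM p1) (SM p2)"
proof -
  note b = biproductD[OF assms]
  have "SM (madd C (cmp C i1 p1) (cmp C i2 p2)) = madd C (SM (cmp C i1 p1)) (SM (cmp C i2 p2))"
    using b by (intro SM_add) auto
  then show ?thesis
    using b SM_comp[of i1 p1, symmetric] SM_comp[of i2 p2, symmetric] SM_comp[of i2 p1, symmetric]
      SM_comp[of i1 p2, symmetric]
    unfolding is_biproduct_def hom_iff by simp
qed

lemma n_gt_2: "2 < n" and n_gt_1: "1 < n"
  using n_ge_3 by auto

lemma is_seqD:
  assumes "is_seq n C SO S"
  shows "\<And>i. 1 \<le> i \<Longrightarrow> i \<le> n \<Longrightarrow> fst S i \<in> Obj C"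
    and "\<And>i. 1 \<le> i \<Longrightarrow> i < n \<Longrightarrow>
      snd S i \<in> Mor C \<and> Dom C (snd S i) = fst S i \<and> Cod C (snd S i) = fst S (Suc i)"
    and "snd S n \<in> Mor C" "Dom C (snd S n) = fst S n" "Cod C (snd S n) = SO (fst S 1)"
  using assms unfolding is_seq_def hom_iff by auto

lemma is_seqI:
  assumes "\<And>i. 1 \<le> i \<Longrightarrow> i \<le> n \<Longrightarrow> fst S i \<in> Obj C"
    and "\<And>i. 1 \<le> i \<Longrightarrow> i < n \<Longrightarrow>
      snd S i \<in> Mor C \<and> Dom C (snd S i) = fst S i \<and> Cod C (snd S i) = fst S (Suc i)"
    and "snd S n \<in> Mor C" "Dom C (snd S n) = fst S n" "Cod C (snd S n) = SO (fst S 1)"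
  shows "is_seq n C SO S"
  using assms unfolding is_seq_def hom_iff by auto

lemma angle_term_in_Obj: "S \<in> N \<Longrightarrow> 1 \<le> i \<Longrightarrow> i \<le> n \<Longrightarrow> fst S i \<in> Obj C"
  using is_seqD(1)[OF angle_is_seq] by blast

lemma seq_morI:
  assumes "is_seq n C SO S" "is_seq n C SO T"
    and "\<And>i. 1 \<le> i \<Longrightarrow> i \<le> n \<Longrightarrow> \<phi> i \<in> Mor C \<and> Dom C (\<phi> i) = fst S i \<and> Cod C (\<phi> i) = fst T i"
    and "\<And>i. 1 \<le> i \<Longrightarrow> i \<le> n \<Longrightarrow> cmp C (snd T i) (\<phi> i) = cmp C (next_term n \<phi> SM i) (snd S i)"
  shows "seq_mor n C SO SM S T \<phi>"
  using assms n_gt_1 unfolding seq_mor_def hom_iff next_term_def by auto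

lemma seq_isoI:
  assumes "is_seq n C SO S" "is_seq n C SO T"
    and "\<And>i. 1 \<le> i \<Longrightarrow> i \<le> n \<Longrightarrow>
      \<phi> i \<in> Mor C \<and> Dom C (\<phi> i) = fst S i \<and> Cod C (\<phi> i) = fst T i \<and> is_iso C (\<phi> i)"
    and "\<And>i. 1 \<le> i \<Longrightarrow> i < n \<Longrightarrow> cmp C (snd T i) (\<phi> i) = cmp C (\<phi> (Suc i)) (snd S i)"
    and "cmp C (snd T n) (\<phi> n) = cmp C (SM (\<phi> 1)) (snd S n)"
  shows "seq_iso n C SO SM S T \<phi>"
  using assms unfolding seq_iso_def seq_mor_def hom_iff by auto

lemma angle_eq_on_terms:
  assumes S: "S \<in> N" and T: "is_seq n C SO T"
    and eq: "\<And>i. 1 \<le> i \<Longrightarrow> i \<le> n \<Longrightarrow> fst T i = fst S i \<and> snd T i = snd S i"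
  shows "T \<in> N"
proof -
  have S_seq: "is_seq n C SO S"
    using S by (rule angle_is_seq)
  note S_data = is_seqD[OF S_seq]
  have "seq_iso n C SO SM S T (\<lambda>i. idm C (fst S i))"
  proof (rule seq_isoI[OF S_seq T])
    fix i
    assume "1 \<le> i" "i < n"
    then show "cmp C (snd T i) (idm C (fst S i)) = cmp C (idm C (fst S (Suc i))) (snd S i)"
      using S_data(2)[of i] eq[of i] by simp
  next
    show "cmp C (snd T n) (idm C (fst S n)) = cmp C (SM (idm C (fst S 1))) (snd S n)"
      using S_data(3-5) S_data(1)[of 1] eq[of n] n_gt_1 by simp
  qed (use S_data eq id_is_iso in auto)
  then show ?thesis
    using angle_iso S by blast
qed

lemma left_rot_is_seq:
  assumes "is_seq n C SO S"
  shows "is_seq n C SO (left_rot n C SO SM S)"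
proof (rule is_seqI)
  note S_data = is_seqD[OF assms]
  fix i
  assume i: "1 \<le> i" "i < n"
  show "snd (left_rot n C SO SM S) i \<in> Mor C \<and>
    Dom C (snd (left_rot n C SO SM S) i) = fst (left_rot n C SO SM S) i \<and>
    Cod C (snd (left_rot n C SO SM S) i) = fst (left_rot n C SO SM S) (Suc i)"
  proof (cases "Suc i < n")
    case True
    then show ?thesis
      using S_data(2)[of "Suc i"] i by (simp add: left_rot_def)
  next
    case False
    then have "Suc i = n"
      using i by simp
    then show ?thesis
      using S_data(3-5) i by (auto simp: left_rot_def)
  qed
next
  note S_data = is_seqD[OF assms]
  have "snd S 1 \<in> Mor C" "Dom C (snd S 1) = fst S 1" "Cod C (snd S 1) = fst S 2"
    using S_data(2)[of 1] n_gt_1 by (auto simp: numeral_2_eq_2)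
  then show "snd (left_rot n C SO SM S) n \<in> Mor C"
    "Dom C (snd (left_rot n C SO SM S) n) = fst (left_rot n C SO SM S) n"
    "Cod C (snd (left_rot n C SO SM S) n) = SO (fst (left_rot n C SO SM S) 1)"
    using n_gt_1 by (auto simp: left_rot_def numeral_2_eq_2)
qed (use is_seqD(1)[OF assms] n_gt_1 in \<open>auto simp: left_rot_def\<close>)

section \<open>Elementary angles\<close>

definition elementary_term :: "nat \<Rightarrow> 'o \<Rightarrow> nat \<Rightarrow> 'o" where
  "elementary_term j B i = (if i = j \<or> i = Suc j then B else zero_obj)"

definition elementary_seq :: "nat \<Rightarrow> 'o \<Rightarrow> ('o, 'm) seq" where
  "elementary_seq j B =
     (elementary_term j B,
      \<lambda>i. if i < n then
             (if i = j then idm C B else mzero C (elementary_term j B i) (elementary_term j B (Suc i)))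
           else mzero C (elementary_term j B n) (SO (elementary_term j B 1)))"

lemma fst_elementary_seq [simp]: "fst (elementary_seq j B) = elementary_term j B"
  by (simp add: elementary_seq_def)

lemma elementary_term_in_Obj [simp]: "B \<in> Obj C \<Longrightarrow> elementary_term j B i \<in> Obj C"
  by (simp add: elementary_term_def)

lemma elementary_seq_is_seq: "B \<in> Obj C \<Longrightarrow> is_seq n C SO (elementary_seq j B)"
  by (rule is_seqI) (auto simp: elementary_seq_def elementary_term_def)

text \<open>The left rotation of the elementary sequence at \<open>j + 1\<close> is isomorphic to the one at \<open>j\<close>,
  so all of them are angles by induction from the trivial angle at \<open>j = 1\<close>.\<close>
lemma elementary_angle:
  assumes B: "B \<in> Obj C" and j: "1 \<le> j" "j < n"
  shows "elementary_seq j B \<in> N"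
  using j
proof (induction j rule: nat_induct_at_least)
  case base
  show ?case
    by (rule angle_eq_on_terms[OF trivial_angle[OF B is_zero_obj_zero_obj] elementary_seq_is_seq[OF B]])
      (use n_gt_2 in \<open>auto simp: elementary_seq_def elementary_term_def trivial_seq_def\<close>)
next
  case (Suc k)
  let ?R = "left_rot n C SO SM (elementary_seq (Suc k) B)"
  have SO_zero: "is_zero_obj C (SO zero_obj)"
    using zero_obj_SO[OF is_zero_obj_zero_obj] .
  have fst_R: "fst ?R i = (if i < n then elementary_term k B i else SO zero_obj)" for i
    using Suc by (auto simp: left_rot_def elementary_term_def)
  have terms_zero: "elementary_term k B n = zero_obj" "elementary_term (Suc k) B 1 = zero_obj"
    using Suc by (auto simp: elementary_term_def)
  define \<phi> where "\<phi> i = (if i < n then idm C (elementary_term k B i) else mzero C zero_obj (SO zero_obj))"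
    for i
  have "seq_iso n C SO SM (elementary_seq k B) ?R \<phi>"
  proof (rule seq_isoI[OF elementary_seq_is_seq[OF B] left_rot_is_seq[OF elementary_seq_is_seq[OF B]]])
    fix i
    assume i: "1 \<le> i" "i \<le> n"
    show "\<phi> i \<in> Mor C \<and> Dom C (\<phi> i) = fst (elementary_seq k B) i \<and> Cod C (\<phi> i) = fst ?R i
      \<and> is_iso C (\<phi> i)"
    proof (cases "i < n")
      case True
      then show ?thesis
        using B by (auto simp: \<phi>_def fst_R id_is_iso)
    next
      case False
      then show ?thesis
        using i zero_mor_between_zero_objs_iso[OF is_zero_obj_zero_obj SO_zero] terms_zero
        by (simp add: \<phi>_def fst_R)
    qed
  next
    fix i
    assume i: "1 \<le> i" "i < n"
    show "cmp C (snd ?R i) (\<phi> i) = cmp C (\<phi> (Suc i)) (snd (elementary_seq k B) i)"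
    proof (cases "Suc i < n")
      case True
      then have "snd ?R i = snd (elementary_seq k B) i"
        using i by (auto simp: left_rot_def elementary_seq_def elementary_term_def)
      then show ?thesis
        using True i B by (simp add: \<phi>_def elementary_seq_def elementary_term_def)
    next
      case False
      then show ?thesis
        by (intro zero_obj_mor_into_unique[OF SO_zero])
          (use i B terms_zero Suc in \<open>auto simp: \<phi>_def elementary_seq_def left_rot_def elementary_term_def\<close>)
    qed
  next
    show "cmp C (snd ?R n) (\<phi> n) = cmp C (SM (\<phi> 1)) (snd (elementary_seq k B) n)"
      by (rule zero_obj_mor_from_unique[OF is_zero_obj_zero_obj])
        (use n_gt_1 B terms_zero Suc in \<open>auto simp: \<phi>_def elementary_seq_def left_rot_def elementary_term_def\<close>)
  qed
  moreover have "elementary_seq k B \<in> N"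
    using Suc by simp
  ultimately have "?R \<in> N"
    using angle_iso by blast
  then show ?case
    using angle_of_left_rot_angle elementary_seq_is_seq[OF B] by blast
qed

section \<open>Direct sums of angles\<close>

text \<open>The termwise direct sum of two sequences, with differentials \<open>diag(\<alpha>\<^sub>i, \<beta>\<^sub>i)\<close>; in degree \<open>n\<close>
  the target biproduct is the image under \<open>\<Sigma>\<close> of the one in degree \<open>1\<close>.\<close>
lemma seq_dsum_exists:
  assumes X: "is_seq n C SO X" and Y: "is_seq n C SO Y"
    and bp: "\<And>i. i \<in> {1..n} \<Longrightarrow> is_biproduct C (fst X i) (fst Y i) (D i) (I1 i) (I2 i) (P1 i) (P2 i)"
  obtains s where "is_seq n C SO (D, s)" "is_seq_dsum n C SO SM (D, s) X Y"
proof -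
  note X_data = is_seqD[OF X] and Y_data = is_seqD[OF Y]
  have bp_next: "is_biproduct C (next_term n (fst X) SO i) (next_term n (fst Y) SO i) (next_term n D SO i)
      (next_term n I1 SM i) (next_term n I2 SM i) (next_term n P1 SM i) (next_term n P2 SM i)"
    if "1 \<le> i" "i \<le> n" for i
    using that bp[of "Suc i"] biproduct_SM[OF bp[of 1]] n_gt_1 by (auto simp: next_term_def)
  have \<alpha>: "snd X i \<in> Mor C" "Dom C (snd X i) = fst X i" "Cod C (snd X i) = next_term n (fst X) SO i"
    and \<beta>: "snd Y i \<in> Mor C" "Dom C (snd Y i) = fst Y i" "Cod C (snd Y i) = next_term n (fst Y) SO i"
    if "1 \<le> i" "i \<le> n" for i
    using that X_data Y_data by (auto simp: next_term_def less_Suc_eq_le dest: le_neq_implies_less)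
  define s where "s i = madd C (cmp C (next_term n I1 SM i) (cmp C (snd X i) (P1 i)))
    (cmp C (next_term n I2 SM i) (cmp C (snd Y i) (P2 i)))" for i
  note diag = biproduct_diag[OF bp bp_next \<alpha> \<beta> s_def]
  have S: "is_seq n C SO (D, s)"
    by (rule is_seqI) (use diag biproductD(3)[OF bp] n_gt_1 in \<open>auto simp: next_term_def\<close>)
  note data = S biproductD[OF bp] diag
  have "is_seq_dsum n C SO SM (D, s) X Y"
    unfolding is_seq_dsum_def
  proof (intro exI conjI ballI)
    show "seq_mor n C SO SM X (D, s) I1" "seq_mor n C SO SM Y (D, s) I2"
      by (rule seq_morI; use X Y data in simp)+
    show "seq_mor n C SO SM (D, s) X P1" "seq_mor n C SO SM (D, s) Y P2"
      by (rule seq_morI; use X Y data in \<open>simp add: diag(6,7)[symmetric]\<close>)+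
  qed (use bp in simp)
  then show ?thesis
    using that S by blast
qed

lemma angle_termwise_dsum:
  assumes X: "X \<in> N" and Y: "Y \<in> N"
  obtains S where "S \<in> N"
    and "\<And>i. i \<in> {1..n} \<Longrightarrow> \<exists>i1 i2 p1 p2. is_biproduct C (fst X i) (fst Y i) (fst S i) i1 i2 p1 p2"
proof -
  have "\<And>i. i \<in> {1..n} \<Longrightarrow> fst X i \<in> Obj C \<and> fst Y i \<in> Obj C"
    using angle_term_in_Obj X Y by auto
  then obtain D I1 I2 P1 P2 where bp: "\<And>i. i \<in> {1..n} \<Longrightarrow>
      is_biproduct C (fst X i) (fst Y i) (D i) (I1 i) (I2 i) (P1 i) (P2 i)"
    using termwise_biproducts[of "{1..n}" "fst X" "fst Y"] by blast
  obtain s where "is_seq n C SO (D, s)" "is_seq_dsum n C SO SM (D, s) X Y"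
    using seq_dsum_exists[OF angle_is_seq[OF X] angle_is_seq[OF Y] bp] by blast
  then have "(D, s) \<in> N"
    using angle_dsum X Y by blast
  then show ?thesis
    using that bp by fastforce
qed

lemma angle_add_elementary:
  assumes S: "S \<in> N" and B: "B \<in> Obj C" and j: "1 \<le> j" "j < n"
  obtains S' where "S' \<in> N"
    and "\<And>i. 1 \<le> i \<Longrightarrow> i \<le> n \<Longrightarrow> i \<noteq> j \<Longrightarrow> i \<noteq> Suc j \<Longrightarrow> isomorphic C (fst S' i) (fst S i)"
    and "\<exists>i1 i2 p1 p2. is_biproduct C (fst S j) B (fst S' j) i1 i2 p1 p2"
    and "\<exists>i1 i2 p1 p2. is_biproduct C (fst S (Suc j)) B (fst S' (Suc j)) i1 i2 p1 p2"
proof -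
  obtain S' where S': "S' \<in> N" and bp: "\<And>i. i \<in> {1..n} \<Longrightarrow>
      \<exists>i1 i2 p1 p2. is_biproduct C (fst S i) (elementary_term j B i) (fst S' i) i1 i2 p1 p2"
    using angle_termwise_dsum[OF S elementary_angle[OF B j], unfolded fst_elementary_seq] by blast
  have "isomorphic C (fst S' i) (fst S i)" if i: "1 \<le> i" "i \<le> n" "i \<noteq> j" "i \<noteq> Suc j" for i
  proof -
    obtain i1 i2 p1 p2 where "is_biproduct C (fst S i) zero_obj (fst S' i) i1 i2 p1 p2"
      using bp[of i] i by (auto simp: elementary_term_def)
    then have "isomorphic C (fst S' i) (dsum (fst S i) zero_obj)"
      by (rule biproduct_isomorphic_dsum)
    then show ?thesis
      using dsum_zero_right angle_term_in_Obj[OF S i(1,2)] isomorphic_trans by blast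
  qed
  moreover have "\<exists>i1 i2 p1 p2. is_biproduct C (fst S j) B (fst S' j) i1 i2 p1 p2"
    "\<exists>i1 i2 p1 p2. is_biproduct C (fst S (Suc j)) B (fst S' (Suc j)) i1 i2 p1 p2"
    using bp[of j] bp[of "Suc j"] j by (auto simp: elementary_term_def)
  ultimately show ?thesis
    using that S' by blast
qed

text \<open>The direct sum of the elementary angles at \<open>1\<close> and \<open>2\<close>.\<close>
lemma angle_through_dsum:
  assumes X: "X \<in> Obj C" and Y: "Y \<in> Obj C"
  obtains S where "S \<in> N" "isomorphic C (fst S 1) X" "isomorphic C (fst S 2) (dsum X Y)"
    "isomorphic C (fst S 3) Y" "\<And>i. 4 \<le> i \<Longrightarrow> i \<le> n \<Longrightarrow> isomorphic C (fst S i) zero_obj"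
proof -
  have E: "elementary_seq 1 X \<in> N" "elementary_seq 2 Y \<in> N"
    using elementary_angle X Y n_gt_2 by auto
  obtain S where S: "S \<in> N" and bp: "\<And>i. i \<in> {1..n} \<Longrightarrow> \<exists>i1 i2 p1 p2.
      is_biproduct C (elementary_term 1 X i) (elementary_term 2 Y i) (fst S i) i1 i2 p1 p2"
    using angle_termwise_dsum[OF E, unfolded fst_elementary_seq] by blast
  have iso: "isomorphic C (fst S i) (dsum (elementary_term 1 X i) (elementary_term 2 Y i))"
    if "1 \<le> i" "i \<le> n" for i
    using bp that biproduct_isomorphic_dsum by fastforce
  show ?thesis
  proof (rule that[OF S])
    show "isomorphic C (fst S 1) X"
      using iso[of 1] n_gt_2 dsum_zero_right[OF X] isomorphic_trans by (simp add: elementary_term_def)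
    show "isomorphic C (fst S 2) (dsum X Y)"
      using iso[of 2] n_gt_2 by (simp add: elementary_term_def)
    show "isomorphic C (fst S 3) Y"
      using iso[of 3] n_gt_2 dsum_zero_left[OF Y] isomorphic_trans by (simp add: elementary_term_def)
    show "isomorphic C (fst S i) zero_obj" if "4 \<le> i" "i \<le> n" for i
      using iso[of i] that dsum_zero_right isomorphic_trans by (simp add: elementary_term_def)
  qed
qed

definition seq_terms :: "(nat \<Rightarrow> bool) \<Rightarrow> ('o, 'm) seq \<Rightarrow> 'o list" where
  "seq_terms P S = map (fst S) (filter P [1..<Suc n])"

lemma set_seq_terms:
  assumes "S \<in> N"
  shows "set (seq_terms P S) \<subseteq> Obj C"
  using angle_term_in_Obj[OF assms] by (auto simp: seq_terms_def less_Suc_eq_le)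

lemma euler_char_class_sum:
  "euler_char n C S = (\<lambda>K. class_sum (seq_terms odd S) K - class_sum (seq_terms even S) K)"
proof -
  have "(\<Sum>i = 1..m. (-1) ^ (i + 1) * gen C (fst S i) K) =
    class_sum (map (fst S) (filter odd [1..<Suc m])) K - class_sum (map (fst S) (filter even [1..<Suc m])) K"
    for m K
    by (induction m) (simp_all add: sum.atLeast1_atMost_eq)
  then show ?thesis
    unfolding euler_char_def seq_terms_def by blast
qed

end

locale complete_dense_subcategory = n_angulated_category C n SO SM N
  for C :: "('o, 'm) addcat" and n SO SM N +
  fixes A :: "'o set" and NA :: "('o, 'm) seq set"
  assumes subcategory: "n_angulated_subcat n C SO SM N A NA"
    and complete: "complete_subcat n N A"
    and dense: "dense_subcat C A"
begin

lemma sub_in_Obj: "X \<in> A \<Longrightarrow> X \<in> Obj C"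
  using subcategory[unfolded n_angulated_subcat_def, THEN conjunct1] by blast

lemma sub_isomorphic_closed: "isomorphic C X Y \<Longrightarrow> X \<in> A \<Longrightarrow> Y \<in> A"
  using subcategory[unfolded n_angulated_subcat_def, THEN conjunct2, THEN conjunct1] isomorphic_in_Obj
  by blast

lemma sub_isomorphic_iff: "isomorphic C X Y \<Longrightarrow> X \<in> A \<longleftrightarrow> Y \<in> A"
  using sub_isomorphic_closed isomorphic_sym by blast

lemma completeD:
  assumes "S \<in> N" "k \<in> {1..n}" "\<And>i. i \<in> {1..n} - {k} \<Longrightarrow> fst S i \<in> A"
  shows "fst S k \<in> A"
  using complete assms unfolding complete_subcat_def by blast

lemma denseE:
  assumes "X \<in> Obj C"
  obtains D Y i1 i2 p1 p2 where "D \<in> A" "is_biproduct C X Y D i1 i2 p1 p2"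
  using dense assms unfolding dense_subcat_def by blast

lemma hom_full_subcat: "X \<in> A \<Longrightarrow> Y \<in> A \<Longrightarrow> hom (full_subcat C A) X Y = hom C X Y"
  by (auto simp: full_subcat_def hom_def)

text \<open>A zero object of the additive category \<open>A\<close> is one of \<open>C\<close>, as \<open>A\<close> is full.\<close>
lemma zero_obj_in_sub: "zero_obj \<in> A"
proof -
  have "n_angulated n (full_subcat C A) SO SM NA"
    using subcategory[unfolded n_angulated_subcat_def] by (elim conjE)
  then have "is_additive (full_subcat C A)"
    unfolding n_angulated_def by (elim conjE)
  then obtain Z where Z: "is_zero_obj (full_subcat C A) Z"
    unfolding is_additive_def by blast
  then have ZA: "Z \<in> A"
    unfolding is_zero_obj_def full_subcat_def by simp
  have "f = g" if "f \<in> hom C Z Z" "g \<in> hom C Z Z" for f g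
    using Z ZA that hom_full_subcat[OF ZA ZA] unfolding is_zero_obj_def full_subcat_def by auto
  then have "idm C Z = mzero C Z Z"
    using id_in_hom hom_group(1) sub_in_Obj[OF ZA] by blast
  then have "isomorphic C Z zero_obj"
    using zero_obj_iff_id_eq_zero sub_in_Obj[OF ZA] zero_mor_between_zero_objs_iso(2)
      is_zero_obj_zero_obj by blast
  then show ?thesis
    using sub_isomorphic_closed ZA by blast
qed

lemma dsum_in_sub_iff:
  assumes X: "X \<in> Obj C" and Y: "Y \<in> A"
  shows "dsum X Y \<in> A \<longleftrightarrow> X \<in> A"
proof -
  obtain S where S: "S \<in> N" "isomorphic C (fst S 1) X" "isomorphic C (fst S 2) (dsum X Y)"
    "isomorphic C (fst S 3) Y" "\<And>i. 4 \<le> i \<Longrightarrow> i \<le> n \<Longrightarrow> isomorphic C (fst S i) zero_obj"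
    using angle_through_dsum[OF X sub_in_Obj[OF Y]] by blast
  have tail: "fst S i \<in> A" if "3 \<le> i" "i \<le> n" for i
  proof (cases "i = 3")
    case True
    then show ?thesis
      using S(4) Y sub_isomorphic_iff by blast
  next
    case False
    then show ?thesis
      using S(5)[of i] that zero_obj_in_sub sub_isomorphic_iff by simp
  qed
  have "fst S k \<in> A" if "k \<in> {1, 2}" "fst S (3 - k) \<in> A" for k
  proof (rule completeD[OF S(1)])
    fix i
    assume "i \<in> {1..n} - {k}"
    then have "i = 3 - k \<or> 3 \<le> i \<and> i \<le> n"
      using that(1) by auto
    then show "fst S i \<in> A"
      using that(2) tail by auto
  qed (use that(1) n_gt_2 in auto)
  then have "fst S 1 \<in> A \<longleftrightarrow> fst S 2 \<in> A"
    by force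
  then show ?thesis
    using S(2,3) sub_isomorphic_iff by blast
qed

section \<open>Lists of objects whose direct sum lies in the subcategory\<close>

definition sum_in_sub :: "'o list \<Rightarrow> bool" where
  "sum_in_sub xs \<longleftrightarrow> set xs \<subseteq> Obj C \<and> dsum_list xs \<in> A"

lemma sum_in_sub_Nil: "sum_in_sub []"
  unfolding sum_in_sub_def using zero_obj_in_sub by simp

lemma sum_in_sub_single: "X \<in> Obj C \<Longrightarrow> sum_in_sub [X] \<longleftrightarrow> X \<in> A"
  unfolding sum_in_sub_def using dsum_zero_right sub_isomorphic_iff by auto

lemma sum_in_sub_perm: "mset xs = mset ys \<Longrightarrow> sum_in_sub xs \<longleftrightarrow> sum_in_sub ys"
  unfolding sum_in_sub_def
  by (metis dsum_list_perm set_mset_mset sub_isomorphic_iff)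

lemma sum_in_sub_isomorphic: "list_all2 (isomorphic C) xs ys \<Longrightarrow> sum_in_sub xs \<longleftrightarrow> sum_in_sub ys"
proof -
  assume iso: "list_all2 (isomorphic C) xs ys"
  then have "set xs \<subseteq> Obj C \<and> set ys \<subseteq> Obj C"
    by (induction rule: list_all2_induct) (use isomorphic_in_Obj in auto)
  then show ?thesis
    unfolding sum_in_sub_def using dsum_list_cong[OF iso] sub_isomorphic_iff by blast
qed

lemma sum_in_sub_biproduct_head:
  "is_biproduct C X Y D i1 i2 p1 p2 \<Longrightarrow> set l \<subseteq> Obj C \<Longrightarrow> sum_in_sub (D # l) \<longleftrightarrow> sum_in_sub (X # Y # l)"
  unfolding sum_in_sub_def using dsum_list_biproduct_head sub_isomorphic_iff biproductD(1-3) by auto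

lemma sum_in_sub_append_iff:
  assumes "sum_in_sub ys" "set xs \<subseteq> Obj C"
  shows "sum_in_sub (xs @ ys) \<longleftrightarrow> sum_in_sub xs"
proof -
  have "set ys \<subseteq> Obj C" "dsum_list ys \<in> A"
    using assms(1) unfolding sum_in_sub_def by auto
  then show ?thesis
    unfolding sum_in_sub_def
    using assms(2) dsum_list_append[of xs ys] sub_isomorphic_iff dsum_in_sub_iff by auto
qed

lemma sum_in_sub_append: "sum_in_sub xs \<Longrightarrow> sum_in_sub ys \<Longrightarrow> sum_in_sub (xs @ ys)"
  using sum_in_sub_append_iff unfolding sum_in_sub_def by blast

lemma sum_in_sub_of_subset: "set xs \<subseteq> A \<Longrightarrow> sum_in_sub xs"
proof (induction xs)
  case Nil
  show ?case
    by (rule sum_in_sub_Nil)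
next
  case (Cons x xs)
  then have "sum_in_sub ([x] @ xs)"
    using sub_in_Obj sum_in_sub_single by (intro sum_in_sub_append) auto
  then show ?case
    by simp
qed

lemma sum_in_sub_replace_term:
  assumes L: "distinct L" "k \<in> set L"
    and Obj: "\<And>l. l \<in> set L \<Longrightarrow> f l \<in> Obj C \<and> g l \<in> Obj C"
    and iso: "\<And>l. l \<in> set L \<Longrightarrow> l \<noteq> k \<Longrightarrow> isomorphic C (f l) (g l)"
    and bp: "is_biproduct C (g k) B (f k) i1 i2 p1 p2" and ws: "set ws \<subseteq> Obj C"
  shows "sum_in_sub (map f L @ ws) \<longleftrightarrow> sum_in_sub (map g L @ B # ws)"
proof -
  obtain L1 L2 where L_split: "L = L1 @ k # L2"
    using L(2) by (meson split_list)
  then have k_notin: "k \<notin> set L1" "k \<notin> set L2"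
    using L(1) by auto
  define h where "h l = (if l = k then f k else g l)" for l
  have "list_all2 (isomorphic C) (map f L) (map h L)"
    unfolding list.rel_map
    by (rule list.rel_refl_strong) (use iso Obj in \<open>auto simp: h_def isomorphic_refl\<close>)
  moreover have "list_all2 (isomorphic C) ws ws"
    by (rule list.rel_refl_strong) (use ws isomorphic_refl in auto)
  ultimately have "sum_in_sub (map f L @ ws) \<longleftrightarrow> sum_in_sub (map h L @ ws)"
    by (intro sum_in_sub_isomorphic list_all2_appendI)
  also have "\<dots> \<longleftrightarrow> sum_in_sub (f k # map g L1 @ map g L2 @ ws)"
  proof -
    have "map h L = map g L1 @ f k # map g L2"
      using k_notin unfolding L_split by (auto simp: h_def)
    then show ?thesis
      by (intro sum_in_sub_perm) simp
  qed
  also have "\<dots> \<longleftrightarrow> sum_in_sub (g k # B # map g L1 @ map g L2 @ ws)"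
    using Obj ws L_split by (intro sum_in_sub_biproduct_head[OF bp]) auto
  also have "\<dots> \<longleftrightarrow> sum_in_sub (map g L @ B # ws)"
    by (intro sum_in_sub_perm) (simp add: L_split)
  finally show ?thesis .
qed

section \<open>Angles have a common complement of their odd and even parts\<close>

definition common_complement :: "'o list \<Rightarrow> 'o list \<Rightarrow> bool" where
  "common_complement xs ys \<longleftrightarrow> set xs \<subseteq> Obj C \<and> set ys \<subseteq> Obj C \<and>
     (\<exists>ws. set ws \<subseteq> Obj C \<and> sum_in_sub (xs @ ws) \<and> sum_in_sub (ys @ ws))"

lemma angle_in_sub_common_complement:
  assumes S: "S \<in> N" and in_sub: "\<And>i. i \<in> {1..<n} \<Longrightarrow> fst S i \<in> A"
  shows "common_complement (seq_terms odd S) (seq_terms even S)"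
proof -
  have "fst S n \<in> A"
    using completeD[OF S] in_sub n_gt_1 by auto
  then have "set (seq_terms P S) \<subseteq> A" for P
    using in_sub by (auto simp: seq_terms_def less_Suc_eq)
  then show ?thesis
    unfolding common_complement_def using set_seq_terms[OF S] sum_in_sub_of_subset
    by (intro conjI exI[of _ "[]"]) auto
qed

lemma sum_in_sub_seq_terms_add_elementary:
  assumes S: "S \<in> N" and S': "S' \<in> N" and j: "1 \<le> j" "j < n" and P: "P j \<longleftrightarrow> \<not> P (Suc j)"
    and iso: "\<And>i. 1 \<le> i \<Longrightarrow> i \<le> n \<Longrightarrow> i \<noteq> j \<Longrightarrow> i \<noteq> Suc j \<Longrightarrow> isomorphic C (fst S' i) (fst S i)"
    and bp_j: "\<exists>i1 i2 p1 p2. is_biproduct C (fst S j) B (fst S' j) i1 i2 p1 p2"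
    and bp_Suc_j: "\<exists>i1 i2 p1 p2. is_biproduct C (fst S (Suc j)) B (fst S' (Suc j)) i1 i2 p1 p2"
    and ws: "set ws \<subseteq> Obj C"
  shows "sum_in_sub (seq_terms P S' @ ws) \<longleftrightarrow> sum_in_sub (seq_terms P S @ B # ws)"
proof -
  define k where "k = (if P j then j else Suc j)"
  obtain i1 i2 p1 p2 where bp: "is_biproduct C (fst S k) B (fst S' k) i1 i2 p1 p2"
    using bp_j bp_Suc_j unfolding k_def by (cases "P j") auto
  show ?thesis
    unfolding seq_terms_def
  proof (rule sum_in_sub_replace_term[where k = k and f = "fst S'" and g = "fst S", OF _ _ _ _ bp ws])
    show "k \<in> set (filter P [1..<Suc n])"
      using j P unfolding k_def by (cases "Suc j = n") auto
    fix l
    assume "l \<in> set (filter P [1..<Suc n])"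
    then have l: "1 \<le> l" "l \<le> n" "P l"
      by auto
    then show "fst S' l \<in> Obj C \<and> fst S l \<in> Obj C"
      using angle_term_in_Obj[OF S] angle_term_in_Obj[OF S'] by blast
    assume "l \<noteq> k"
    then have "l \<noteq> j" "l \<noteq> Suc j"
      using P l(3) unfolding k_def by auto
    then show "isomorphic C (fst S' l) (fst S l)"
      using iso l(1,2) by blast
  qed simp
qed

text \<open>Adding the elementary angle on a complement \<open>B\<close> of the \<open>j\<close>-th term, given by density, puts that
  term into the subcategory; \<open>B\<close> is added to both the odd and the even part.\<close>
lemma common_complement_step:
  assumes S: "S \<in> N" and j: "1 \<le> j" "j < n" and in_sub: "\<And>i. i \<in> {1..<j} \<Longrightarrow> fst S i \<in> A"
    and IH: "\<And>S'. S' \<in> N \<Longrightarrow> (\<And>i. i \<in> {1..<Suc j} \<Longrightarrow> fst S' i \<in> A) \<Longrightarrow>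
      common_complement (seq_terms odd S') (seq_terms even S')"
  shows "common_complement (seq_terms odd S) (seq_terms even S)"
proof -
  obtain D B b1 b2 q1 q2 where D: "D \<in> A" "is_biproduct C (fst S j) B D b1 b2 q1 q2"
    using denseE angle_term_in_Obj[OF S j(1)] j(2) by (metis less_imp_le)
  have B: "B \<in> Obj C"
    using biproductD(2)[OF D(2)] .
  obtain S' where S': "S' \<in> N"
    and iso: "\<And>i. 1 \<le> i \<Longrightarrow> i \<le> n \<Longrightarrow> i \<noteq> j \<Longrightarrow> i \<noteq> Suc j \<Longrightarrow> isomorphic C (fst S' i) (fst S i)"
    and bp_j: "\<exists>i1 i2 p1 p2. is_biproduct C (fst S j) B (fst S' j) i1 i2 p1 p2"
    and bp_Suc_j: "\<exists>i1 i2 p1 p2. is_biproduct C (fst S (Suc j)) B (fst S' (Suc j)) i1 i2 p1 p2"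
    using angle_add_elementary[OF S B j] by blast
  have "fst S' i \<in> A" if i: "i \<in> {1..<Suc j}" for i
  proof (cases "i = j")
    case True
    have "isomorphic C D (fst S' j)"
      using bp_j biproduct_isomorphic_dsum[OF D(2)] biproduct_isomorphic_dsum isomorphic_sym
        isomorphic_trans by blast
    then show ?thesis
      using True D(1) sub_isomorphic_closed by blast
  next
    case False
    then show ?thesis
      using i in_sub iso[of i] j sub_isomorphic_iff by auto
  qed
  then obtain ws where ws: "set ws \<subseteq> Obj C" "sum_in_sub (seq_terms odd S' @ ws)"
    "sum_in_sub (seq_terms even S' @ ws)"
    using IH[OF S'] unfolding common_complement_def by blast
  have "sum_in_sub (seq_terms P S @ B # ws)" if "P j \<longleftrightarrow> \<not> P (Suc j)" "sum_in_sub (seq_terms P S' @ ws)"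
    for P
    using sum_in_sub_seq_terms_add_elementary[OF S S' j that(1) iso bp_j bp_Suc_j ws(1)] that(2) by blast
  then show ?thesis
    unfolding common_complement_def using set_seq_terms[OF S] ws B
    by (intro conjI exI[of _ "B # ws"]) auto
qed

lemma angle_common_complement:
  assumes "S \<in> N"
  shows "common_complement (seq_terms odd S) (seq_terms even S)"
proof -
  define Q where "Q j \<longleftrightarrow> (\<forall>S\<in>N. (\<forall>i\<in>{1..<j}. fst S i \<in> A) \<longrightarrow>
    common_complement (seq_terms odd S) (seq_terms even S))" for j
  have "Q 1"
  proof (rule inc_induct[of 1 n Q])
    show "Q n"
      unfolding Q_def using angle_in_sub_common_complement by blast
    show "Q j" if "1 \<le> j" "j < n" "Q (Suc j)" for j
      using that common_complement_step unfolding Q_def by blast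
  qed (use n_gt_1 in auto)
  then show ?thesis
    using assms unfolding Q_def by simp
qed

section \<open>Relations in the Grothendieck group\<close>

lemma sum_in_sub_class_sum_eq:
  assumes "class_sum xs = class_sum ys" "set xs \<subseteq> Obj C" "set ys \<subseteq> Obj C" "set ws \<subseteq> Obj C"
  shows "sum_in_sub (xs @ ws) \<longleftrightarrow> sum_in_sub (ys @ ws)"
proof -
  obtain zs where zs: "mset zs = mset ys" "list_all2 (isomorphic C) xs zs"
    using class_sum_eq_imp_isomorphic_perm assms(1-3) by blast
  have "list_all2 (isomorphic C) ws ws"
    by (rule list.rel_refl_strong) (use assms(4) isomorphic_refl in auto)
  then have "sum_in_sub (xs @ ws) \<longleftrightarrow> sum_in_sub (zs @ ws)"
    using zs(2) by (intro sum_in_sub_isomorphic list_all2_appendI)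
  also have "\<dots> \<longleftrightarrow> sum_in_sub (ys @ ws)"
    using zs(1) by (intro sum_in_sub_perm) simp
  finally show ?thesis .
qed

lemma common_complement_sub: "Y \<in> A \<Longrightarrow> common_complement [Y] []"
  unfolding common_complement_def using sub_in_Obj sum_in_sub_single sum_in_sub_Nil
  by (intro conjI exI[of _ "[]"]) auto

lemma common_complement_diff:
  assumes "common_complement xs ys" "common_complement xs' ys'"
  shows "common_complement (xs @ ys') (ys @ xs')"
proof -
  obtain ws where ws: "set ws \<subseteq> Obj C" "sum_in_sub (xs @ ws)" "sum_in_sub (ys @ ws)"
    using assms(1) unfolding common_complement_def by blast
  obtain ws' where ws': "set ws' \<subseteq> Obj C" "sum_in_sub (xs' @ ws')" "sum_in_sub (ys' @ ws')"
    using assms(2) unfolding common_complement_def by blast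
  have "sum_in_sub ((xs @ ys') @ ws @ ws')"
    using sum_in_sub_append[OF ws(2) ws'(3)] sum_in_sub_perm[of "(xs @ ws) @ ys' @ ws'"] by simp
  moreover have "sum_in_sub ((ys @ xs') @ ws @ ws')"
    using sum_in_sub_append[OF ws(3) ws'(2)] sum_in_sub_perm[of "(ys @ ws) @ xs' @ ws'"] by simp
  ultimately show ?thesis
    using assms ws ws' unfolding common_complement_def by (intro conjI exI[of _ "ws @ ws'"]) auto
qed

lemma zspan_relations_common_complement:
  assumes "f \<in> zspan (K0_relations n C N \<union> {gen C Y | Y. Y \<in> A})"
  shows "\<exists>xs ys. common_complement xs ys \<and> f = (\<lambda>K. class_sum xs K - class_sum ys K)"
  using assms
proof (induction rule: zspan.induct)
  case zspan_zero
  have "common_complement [] []"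
    unfolding common_complement_def using sum_in_sub_Nil by (intro conjI exI[of _ "[]"]) auto
  then show ?case
    by force
next
  case (zspan_gen g)
  then consider (angle) S where "S \<in> N" "g = euler_char n C S"
    | (zero) Z where "is_zero_obj C Z" "g = gen C Z" | (sub) Y where "Y \<in> A" "g = gen C Y"
    unfolding K0_relations_def by (auto split: if_splits)
  then show ?case
  proof cases
    case angle
    then show ?thesis
      using angle_common_complement euler_char_class_sum by blast
  next
    case zero
    then have "Z \<in> A"
      using zero_mor_between_zero_objs_iso(2) is_zero_obj_zero_obj zero_obj_in_sub sub_isomorphic_iff
      by blast
    then show ?thesis
      using common_complement_sub zero(2) by (intro exI[of _ "[Z]"] exI[of _ "[]"]) auto
  next
    case sub
    then show ?thesis
      using common_complement_sub by (intro exI[of _ "[Y]"] exI[of _ "[]"]) auto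
  qed
next
  case (zspan_diff x y)
  then obtain xs ys xs' ys' where "common_complement xs ys" "x = (\<lambda>K. class_sum xs K - class_sum ys K)"
    "common_complement xs' ys'" "y = (\<lambda>K. class_sum xs' K - class_sum ys' K)"
    by blast
  then show ?case
    using common_complement_diff by (intro exI[of _ "xs @ ys'"] exI[of _ "ys @ xs'"]) auto
qed

lemma sub_iff_class_zero_mod_image:
  assumes X: "X \<in> Obj C"
  shows "X \<in> A \<longleftrightarrow> class_zero_mod_image n C N A X"
proof
  assume "X \<in> A"
  then show "class_zero_mod_image n C N A X"
    unfolding class_zero_mod_image_def by (intro zspan_gen) blast
next
  assume "class_zero_mod_image n C N A X"
  then obtain xs ys where cc: "common_complement xs ys"
    and gen_X: "gen C X = (\<lambda>K. class_sum xs K - class_sum ys K)"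
    unfolding class_zero_mod_image_def using zspan_relations_common_complement by blast
  obtain ws where ws: "set ws \<subseteq> Obj C" "sum_in_sub (xs @ ws)" "sum_in_sub (ys @ ws)"
    and objs: "set xs \<subseteq> Obj C" "set ys \<subseteq> Obj C"
    using cc unfolding common_complement_def by blast
  have "class_sum xs = class_sum (X # ys)"
    using gen_X by (simp add: fun_eq_iff)
  then have "sum_in_sub ([X] @ ys @ ws)"
    using sum_in_sub_class_sum_eq[of xs "X # ys" ws] ws objs X by simp
  then have "sum_in_sub [X]"
    using sum_in_sub_append_iff[of "ys @ ws" "[X]"] ws X by simp
  then show "X \<in> A"
    using sum_in_sub_single X by blast
qed

end

theorem lemma4p4:
  fixes n :: nat and C :: "('o, 'm) addcat" and SO :: "'o \<Rightarrow> 'o" and SM :: "'m \<Rightarrow> 'm"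
    and N :: "('o, 'm) seq set" and A :: "'o set" and NA :: "('o, 'm) seq set" and X :: 'o
  assumes "n \<ge> 3" and "odd n"
    and "n_angulated n C SO SM N"
    and "n_angulated_subcat n C SO SM N A NA"
    and "complete_subcat n N A"
    and "dense_subcat C A"
    and "X \<in> Obj C"
  shows "X \<in> A \<longleftrightarrow> class_zero_mod_image n C N A X"
proof -
  have "is_additive C"
    using assms(3) unfolding n_angulated_def by (elim conjE)
  then interpret complete_dense_subcategory C n SO SM N A NA
    using assms by unfold_locales
  show ?thesis
    using sub_iff_class_zero_mod_image[OF assms(7)] .
qed

end
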